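(* Let $X\sim\mathcal N(\mu,\sigma^2)$ on $\mathcal X=\mathbb R$ with $\sigma>0$, and take the squared distortion $\Delta(x,\hat x)=(x-\hat x)^2$. Define $$\phi(D):=\inf_{p_{\hat X|X}}\{I(X;\hat X):\mathbb E[(X-\hat X)^2]\le D,\ p_{\hat X}=p_X\}.$$ Define $\varphi(D)$ as the infimum of $\max\{I(X;U),I(\hat X;U)\}$ over Polish spaces $\mathcal U$ and kernels $p_{U\hat X|X}$ with $\hat X\in\mathbb R$, subject to: - $\mathbb E[(X-\hat X)^2]\le D$; - $X\leftrightarrow U\leftrightarrow\hat X$ is a Markov chain; - $p_{\hat X}=p_X$. Then for $D\in[0,2\sigma^2)$, $$\phi(D)=\tfrac12\log\frac{4\sigma^4}{4\sigma^2D-D^2}\qquad\text{and}\qquad\varphi(D)=\tfrac12\log\frac{2\sigma^2}{D},$$ both interpreted as $+\infty$ at $D=0$. For $D\ge2\sigma^2$, $\phi(D)=\varphi(D)=0$.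
   Context: Logarithms are base 2. *)

theory Defs
  imports "HOL-Probability.Probability"
begin

definition Polish_space :: "'a topology \<Rightarrow> bool" where
  "Polish_space X \<longleftrightarrow> completely_metrizable_space X \<and> separable_space X"

definition borel_of :: "'a topology \<Rightarrow> 'a measure" where
  "borel_of X = sigma (topspace X) {U. openin X U}"

(* For probability measures P << Q with f = dP/dQ,
   D(P||Q) = int f log2 f dQ = int (f ln f - f + 1)/ln 2 dQ  (nonnegative integrand). *)
definition KL_div :: "'a measure \<Rightarrow> 'a measure \<Rightarrow> ennreal" where
  "KL_div P Q =
    (if sets P = sets Q \<and> absolutely_continuous Q P
     then \<integral>\<^sup>+ x. ennreal (let t = enn2real (RN_deriv Q P x) in (t * ln t - t + 1) / ln 2) \<partial>Q
     else \<infinity>)"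

definition mutual_info :: "'a measure \<Rightarrow> 'b measure \<Rightarrow> ('a \<times> 'b) measure \<Rightarrow> ennreal" where
  "mutual_info A B J = KL_div J (distr J A fst \<Otimes>\<^sub>M distr J B snd)"

(* Gaussian law N(mu, sigma^2) on the real line (sigma is the standard deviation) *)
definition gaussian :: "real \<Rightarrow> real \<Rightarrow> real measure" where
  "gaussian \<mu> \<sigma> = density lborel (\<lambda>x. ennreal (normal_density \<mu> \<sigma> x))"

(* Markov chain X -- U -- Y for a joint law P of (X,U,Y) on A x (B x C):
   the conditional law of Y given (X,U) depends only on U. *)
definition markov_chain :: "'a measure \<Rightarrow> 'b measure \<Rightarrow> 'c measure \<Rightarrow> ('a \<times> 'b \<times> 'c) measure \<Rightarrow> bool" where
  "markov_chain A B C P \<longleftrightarrow>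
    (\<exists>q \<in> B \<rightarrow>\<^sub>M prob_algebra C.
       P = distr P (A \<Otimes>\<^sub>M B) (\<lambda>(x,u,y). (x,u)) \<bind>
             (\<lambda>(x,u). distr (q u) (A \<Otimes>\<^sub>M (B \<Otimes>\<^sub>M C)) (\<lambda>y. (x,u,y))))"

definition phi :: "real \<Rightarrow> real \<Rightarrow> real \<Rightarrow> ennreal" where
  "phi \<mu> \<sigma> D =
    (INF K \<in> {K. K \<in> borel \<rightarrow>\<^sub>M prob_algebra (borel :: real measure) \<and>
             (let P = gaussian \<mu> \<sigma> \<bind> (\<lambda>x. distr (K x) (borel \<Otimes>\<^sub>M borel) (\<lambda>y. (x, y))) in
                (\<integral>\<^sup>+ z. ennreal ((fst z - snd z)\<^sup>2) \<partial>P) \<le> ennreal D \<and>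
                distr P borel snd = gaussian \<mu> \<sigma>)}.
       mutual_info borel borel
         (gaussian \<mu> \<sigma> \<bind> (\<lambda>x. distr (K x) (borel \<Otimes>\<^sub>M borel) (\<lambda>y. (x, y)))))"

definition joint3 :: "real \<Rightarrow> real \<Rightarrow> 'u topology \<Rightarrow> (real \<Rightarrow> ('u \<times> real) measure) \<Rightarrow> (real \<times> 'u \<times> real) measure" where
  "joint3 \<mu> \<sigma> T K = gaussian \<mu> \<sigma> \<bind>
      (\<lambda>x. distr (K x) (borel \<Otimes>\<^sub>M (borel_of T \<Otimes>\<^sub>M borel)) (\<lambda>(u, y). (x, u, y)))"

(* varphi(D): inf of max{I(X;U), I(Xhat;U)} over Polish spaces U (topologies on a subset of
   the reals, which up to homeomorphism covers every Polish space since |U| <= continuum)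
   and kernels p_{U Xhat|X} with E(X-Xhat)^2 <= D, X -- U -- Xhat Markov, p_Xhat = p_X *)
definition varphi :: "real \<Rightarrow> real \<Rightarrow> real \<Rightarrow> ennreal" where
  "varphi \<mu> \<sigma> D =
    (INF TK \<in> {(T :: real topology, K). Polish_space T \<and>
               K \<in> borel \<rightarrow>\<^sub>M prob_algebra (borel_of T \<Otimes>\<^sub>M (borel :: real measure)) \<and>
               (\<integral>\<^sup>+ z. ennreal ((fst z - snd (snd z))\<^sup>2) \<partial>(joint3 \<mu> \<sigma> T K)) \<le> ennreal D \<and>
               markov_chain borel (borel_of T) borel (joint3 \<mu> \<sigma> T K) \<and>
               distr (joint3 \<mu> \<sigma> T K) borel (\<lambda>z. snd (snd z)) = gaussian \<mu> \<sigma>}.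
       max (mutual_info borel (borel_of (fst TK))
              (distr (joint3 \<mu> \<sigma> (fst TK) (snd TK)) (borel \<Otimes>\<^sub>M borel_of (fst TK)) (\<lambda>z. (fst z, fst (snd z)))))
           (mutual_info borel (borel_of (fst TK))
              (distr (joint3 \<mu> \<sigma> (fst TK) (snd TK)) (borel \<Otimes>\<^sub>M borel_of (fst TK)) (\<lambda>z. (snd (snd z), fst (snd z))))))"

end

theory Submission
  imports Defs
begin

(*
  Lower bounds rest on one inequality: if X ~ N(mu, sigma^2) and some estimator m(U) has mean
  squared error at most c, then I(X;U) >= 1/2 log (sigma^2 / c).  This is the Donsker-Varadhan
  bound for the Kullback-Leibler divergence, tested with the log-likelihood ratio of the channel
  X | U ~ N(m(U), c) against the source.

  For phi, U is the reconstruction itself and the linear estimator mu + rho (Xhat - mu) with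
  rho = 1 - D / (2 sigma^2) has error sigma^2 (1 - rho^2), because both marginals are N(mu, sigma^2).
  For varphi, the Markov chain makes E[Xhat | U] an estimator of X and of Xhat whose two errors add
  up to at most D, so one of them is at most D/2.  At D = 0 the bound holds for every c > 0.

  Both bounds are attained by jointly Gaussian laws: (X, Xhat) with correlation 1 - D / (2 sigma^2)
  for phi, and X -> U -> Xhat through two copies of the Gaussian channel with correlation
  sqrt (1 - D / (2 sigma^2)) for varphi; for D >= 2 sigma^2 correlation 0 costs nothing.
*)

lemma nn_integral_eq_ennreal_imp_integral:
  fixes f :: "'a \<Rightarrow> real"
  assumes [measurable]: "f \<in> borel_measurable M" and nonneg: "\<And>x. 0 \<le> f x"
    and eq: "(\<integral>\<^sup>+x. ennreal (f x) \<partial>M) = ennreal c" and "0 \<le> c"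
  shows "integrable M f" "(\<integral>x. f x \<partial>M) = c"
proof -
  show int: "integrable M f"
    using eq nonneg by (intro integrableI_nonneg) auto
  have "ennreal (\<integral>x. f x \<partial>M) = ennreal c"
    using eq nonneg int by (subst (asm) nn_integral_eq_integral) auto
  then show "(\<integral>x. f x \<partial>M) = c"
    using \<open>0 \<le> c\<close> nonneg by (simp add: integral_nonneg)
qed

lemma nn_integral_le_ennreal_imp_integral:
  fixes f :: "'a \<Rightarrow> real"
  assumes [measurable]: "f \<in> borel_measurable M" and nonneg: "\<And>x. 0 \<le> f x"
    and le: "(\<integral>\<^sup>+x. ennreal (f x) \<partial>M) \<le> ennreal c" and "0 \<le> c"
  shows "integrable M f" "(\<integral>x. f x \<partial>M) \<le> c"
proof -
  show int: "integrable M f"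
    using le nonneg by (intro integrableI_nonneg) (auto simp: top_unique intro: le_less_trans)
  have "ennreal (\<integral>x. f x \<partial>M) \<le> ennreal c"
    using le nonneg int by (subst nn_integral_eq_integral[symmetric]) auto
  then show "(\<integral>x. f x \<partial>M) \<le> c"
    using \<open>0 \<le> c\<close> by (simp add: ennreal_le_iff)
qed

lemma ennreal_integral_le_nn_integral:
  fixes f :: "'a \<Rightarrow> real"
  assumes "integrable M f"
  shows "ennreal (\<integral>x. f x \<partial>M) \<le> (\<integral>\<^sup>+x. ennreal (f x) \<partial>M)"
proof -
  have int_pos: "integrable M (\<lambda>x. max (f x) 0)" using assms by auto
  have "ennreal (\<integral>x. f x \<partial>M) \<le> ennreal (\<integral>x. max (f x) 0 \<partial>M)"
    using assms int_pos by (intro ennreal_leI integral_mono) auto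
  also have "\<dots> = (\<integral>\<^sup>+x. ennreal (max (f x) 0) \<partial>M)"
    using int_pos by (subst nn_integral_eq_integral) auto
  also have "\<dots> = (\<integral>\<^sup>+x. ennreal (f x) \<partial>M)"
    by (intro nn_integral_cong) (auto simp: max_def ennreal_neg)
  finally show ?thesis .
qed

lemma ennreal_eq_top_if_ge_of_nat:
  assumes "\<And>n::nat. ennreal (real n) \<le> x"
  shows "x = \<top>"
proof (rule ccontr)
  assume "x \<noteq> \<top>"
  then obtain y where "x = ennreal y" "0 \<le> y" by (cases x) auto
  moreover obtain n :: nat where "y < real n" using reals_Archimedean2 by blast
  ultimately show False using assms[of n] by (simp add: ennreal_le_iff2 not_le)
qed

lemma prob_space_gaussian: "\<sigma> > 0 \<Longrightarrow> prob_space (gaussian \<mu> \<sigma>)"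
  unfolding gaussian_def by (rule prob_space_normal_density)

lemma sets_gaussian [simp, measurable_cong]: "sets (gaussian \<mu> \<sigma>) = sets borel"
  unfolding gaussian_def by simp

lemma space_gaussian [simp]: "space (gaussian \<mu> \<sigma>) = UNIV"
  unfolding gaussian_def by simp

lemma emeasure_gaussian_UNIV: "\<sigma> > 0 \<Longrightarrow> emeasure (gaussian \<mu> \<sigma>) UNIV = 1"
  using prob_space.emeasure_space_1[OF prob_space_gaussian] by simp

lemma nn_integral_gaussian:
  "f \<in> borel_measurable borel \<Longrightarrow>
   (\<integral>\<^sup>+y. f y \<partial>gaussian \<mu> \<sigma>) = (\<integral>\<^sup>+y. ennreal (normal_density \<mu> \<sigma> y) * f y \<partial>lborel)"
  unfolding gaussian_def by (subst nn_integral_density) auto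

lemma nn_integral_normal_density_eq_1:
  "\<sigma> > 0 \<Longrightarrow> (\<integral>\<^sup>+x. ennreal (normal_density \<mu> \<sigma> x) \<partial>lborel) = 1"
  by (subst nn_integral_eq_integral) auto

lemma has_bochner_integral_normal_density_affine_square:
  assumes "\<sigma> > 0"
  shows "has_bochner_integral lborel (\<lambda>y. normal_density \<mu> \<sigma> y * (\<alpha> + \<beta> * y)\<^sup>2)
           ((\<alpha> + \<beta> * \<mu>)\<^sup>2 + \<beta>\<^sup>2 * \<sigma>\<^sup>2)"
proof -
  have m0: "has_bochner_integral lborel (\<lambda>x. normal_density \<mu> \<sigma> x * (x - \<mu>) ^ (2 * 0)) 1"
    using normal_moment_even[OF assms, of \<mu> 0] by simp
  have m1: "has_bochner_integral lborel (\<lambda>x. normal_density \<mu> \<sigma> x * (x - \<mu>) ^ (2 * 0 + 1)) 0"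
    using normal_moment_odd[OF assms, of \<mu> 0] by simp
  have m2: "has_bochner_integral lborel (\<lambda>x. normal_density \<mu> \<sigma> x * (x - \<mu>) ^ (2 * 1)) (\<sigma>\<^sup>2)"
    using normal_moment_even[OF assms, of \<mu> 1] by (simp add: field_simps)
  have "has_bochner_integral lborel
     (\<lambda>x. (\<alpha> + \<beta> * \<mu>)\<^sup>2 * (normal_density \<mu> \<sigma> x * (x - \<mu>) ^ (2 * 0))
        + (2 * (\<alpha> + \<beta> * \<mu>) * \<beta>) * (normal_density \<mu> \<sigma> x * (x - \<mu>) ^ (2 * 0 + 1))
        + \<beta>\<^sup>2 * (normal_density \<mu> \<sigma> x * (x - \<mu>) ^ (2 * 1)))
     ((\<alpha> + \<beta> * \<mu>)\<^sup>2 * 1 + (2 * (\<alpha> + \<beta> * \<mu>) * \<beta>) * 0 + \<beta>\<^sup>2 * \<sigma>\<^sup>2)"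
    by (intro has_bochner_integral_add has_bochner_integral_mult_right m0 m1 m2)
  then show ?thesis
    by (simp add: power2_eq_square algebra_simps)
qed

lemma nn_integral_gaussian_affine_square:
  assumes "\<sigma> > 0"
  shows "(\<integral>\<^sup>+y. ennreal ((\<alpha> + \<beta> * y)\<^sup>2) \<partial>gaussian \<mu> \<sigma>) = ennreal ((\<alpha> + \<beta> * \<mu>)\<^sup>2 + \<beta>\<^sup>2 * \<sigma>\<^sup>2)"
proof -
  have "(\<integral>\<^sup>+y. ennreal ((\<alpha> + \<beta> * y)\<^sup>2) \<partial>gaussian \<mu> \<sigma>) =
        (\<integral>\<^sup>+y. ennreal (normal_density \<mu> \<sigma> y * (\<alpha> + \<beta> * y)\<^sup>2) \<partial>lborel)"
    by (subst nn_integral_gaussian) (auto simp: ennreal_mult)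
  also have "\<dots> = ennreal ((\<alpha> + \<beta> * \<mu>)\<^sup>2 + \<beta>\<^sup>2 * \<sigma>\<^sup>2)"
    using has_bochner_integral_normal_density_affine_square[OF assms, of \<mu> \<alpha> \<beta>]
    by (subst nn_integral_eq_integral) (auto simp: has_bochner_integral_iff)
  finally show ?thesis .
qed

lemma
  assumes "\<sigma> > 0"
  shows integrable_gaussian_affine_square: "integrable (gaussian \<mu> \<sigma>) (\<lambda>y. (\<alpha> + \<beta> * y)\<^sup>2)"
    and integral_gaussian_affine_square:
      "(\<integral>y. (\<alpha> + \<beta> * y)\<^sup>2 \<partial>gaussian \<mu> \<sigma>) = (\<alpha> + \<beta> * \<mu>)\<^sup>2 + \<beta>\<^sup>2 * \<sigma>\<^sup>2"
  using nn_integral_eq_ennreal_imp_integral[OF _ _ nn_integral_gaussian_affine_square[OF assms]]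
  by auto

lemma gaussian_marginal_second_moment:
  assumes "\<sigma> > 0" and [measurable]: "f \<in> P \<rightarrow>\<^sub>M borel" and law: "distr P borel f = gaussian \<mu> \<sigma>"
  shows "integrable P (\<lambda>z. (f z - \<mu>)\<^sup>2)" "(\<integral>z. (f z - \<mu>)\<^sup>2 \<partial>P) = \<sigma>\<^sup>2"
proof -
  have "integrable (distr P borel f) (\<lambda>x. (x - \<mu>)\<^sup>2)"
    unfolding law using integrable_gaussian_affine_square[OF assms(1), of \<mu> "-\<mu>" 1] by simp
  then show "integrable P (\<lambda>z. (f z - \<mu>)\<^sup>2)"
    by (subst (asm) integrable_distr_eq) auto
  have "(\<integral>z. (f z - \<mu>)\<^sup>2 \<partial>P) = (\<integral>x. (x - \<mu>)\<^sup>2 \<partial>distr P borel f)"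
    by (rule integral_distr[symmetric]) auto
  also have "\<dots> = \<sigma>\<^sup>2"
    unfolding law using integral_gaussian_affine_square[OF assms(1), of \<mu> "-\<mu>" 1] by simp
  finally show "(\<integral>z. (f z - \<mu>)\<^sup>2 \<partial>P) = \<sigma>\<^sup>2" .
qed

text \<open>The exponent is the log-likelihood ratio of \<open>N(c, v)\<close> against \<open>N(\<mu>, \<sigma>\<^sup>2)\<close>.\<close>

lemma normal_density_mult_exp_log_likelihood_ratio:
  assumes "\<sigma> > 0" "v > 0"
  shows "normal_density \<mu> \<sigma> x *
           exp (ln \<sigma> - ln (sqrt v) - (x - c)\<^sup>2 / (2 * v) + (x - \<mu>)\<^sup>2 / (2 * \<sigma>\<^sup>2))
       = normal_density c (sqrt v) x"
proof -
  define A where "A = (x - c)\<^sup>2 / (2 * v)"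
  define B where "B = (x - \<mu>)\<^sup>2 / (2 * \<sigma>\<^sup>2)"
  have e: "exp (ln \<sigma> - ln (sqrt v) - A + B) = (\<sigma> / sqrt v) * exp B / exp A"
    using assms by (simp add: exp_add exp_diff)
  have n1: "normal_density \<mu> \<sigma> x = 1 / (sqrt (2 * pi) * \<sigma>) / exp B"
    unfolding normal_density_def B_def using assms by (simp add: real_sqrt_mult exp_minus inverse_eq_divide)
  have n2: "normal_density c (sqrt v) x = 1 / (sqrt (2 * pi) * sqrt v) / exp A"
    unfolding normal_density_def A_def using assms by (simp add: real_sqrt_mult exp_minus inverse_eq_divide)
  show ?thesis
    unfolding A_def[symmetric] B_def[symmetric] e n1 n2 using assms by (simp add: field_simps)
qed

lemma nn_integral_gaussian_exp_log_likelihood_ratio: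
  assumes "\<sigma> > 0" "v > 0"
  shows "(\<integral>\<^sup>+x. ennreal (exp (ln \<sigma> - ln (sqrt v) - (x - c)\<^sup>2 / (2 * v) + (x - \<mu>)\<^sup>2 / (2 * \<sigma>\<^sup>2)))
           \<partial>gaussian \<mu> \<sigma>) = 1"
proof -
  have "(\<integral>\<^sup>+x. ennreal (exp (ln \<sigma> - ln (sqrt v) - (x - c)\<^sup>2 / (2 * v) + (x - \<mu>)\<^sup>2 / (2 * \<sigma>\<^sup>2)))
           \<partial>gaussian \<mu> \<sigma>) = (\<integral>\<^sup>+x. ennreal (normal_density c (sqrt v) x) \<partial>lborel)"
    by (subst nn_integral_gaussian) (auto intro!: nn_integral_cong simp: ennreal_mult[symmetric]
        normal_density_mult_exp_log_likelihood_ratio[OF assms])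
  also have "\<dots> = 1" using assms by (simp add: nn_integral_normal_density_eq_1)
  finally show ?thesis .
qed

section \<open>Kullback--Leibler divergence\<close>

lemma mult_sub_exp_le_entropy_term:
  fixes t g :: real
  assumes "0 \<le> t"
  shows "t * g - exp g + 1 \<le> t * ln t - t + 1"
proof (cases "t = 0")
  case False
  then have "t > 0" using assms by simp
  have "t * (1 + (g - ln t)) \<le> t * exp (g - ln t)"
    using \<open>t > 0\<close> exp_ge_add_one_self[of "g - ln t"] by (intro mult_left_mono) auto
  also have "\<dots> = exp g"
    using \<open>t > 0\<close> by (simp add: exp_diff)
  finally show ?thesis by (simp add: algebra_simps)
qed simp

text \<open>Donsker--Varadhan: if \<open>\<integral> e\<^sup>g dQ = 1\<close> then \<open>\<integral> g dP\<close> nats is at most \<open>D(P\<parallel>Q)\<close>;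
  pointwise this is \<open>mult_sub_exp_le_entropy_term\<close> at \<open>t = dP/dQ\<close>.\<close>

lemma KL_div_ge_integral:
  assumes P: "prob_space P" and Q: "prob_space Q" and sets_eq: "sets P = sets Q"
    and [measurable]: "g \<in> borel_measurable Q"
    and int_P: "integrable P g" and int_Q: "integrable Q (\<lambda>x. exp (g x))"
    and normalized: "(\<integral>x. exp (g x) \<partial>Q) = 1"
  shows "ennreal ((\<integral>x. g x \<partial>P) / ln 2) \<le> KL_div P Q"
proof (cases "absolutely_continuous Q P")
  case False
  then show ?thesis by (simp add: KL_div_def)
next
  case ac: True
  interpret Q: prob_space Q by fact
  interpret P: prob_space P by fact
  define t where "t x = enn2real (RN_deriv Q P x)" for x
  have [measurable]: "t \<in> borel_measurable Q" unfolding t_def by simp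
  have RN: "density Q (RN_deriv Q P) = P"
    by (rule Q.density_RN_deriv[OF ac sets_eq])
  have "AE x in Q. RN_deriv Q P x \<noteq> \<infinity>"
    by (rule Q.RN_deriv_finite[OF _ ac sets_eq]) (simp add: P.sigma_finite_measure_axioms)
  then have "density Q (RN_deriv Q P) = density Q (\<lambda>x. ennreal (t x))"
    unfolding t_def by (intro density_cong) (auto simp: less_top)
  then have P_density: "P = density Q (\<lambda>x. ennreal (t x))"
    using RN by simp
  have int_tg: "integrable Q (\<lambda>x. t x * g x)"
    using int_P unfolding P_density by (subst (asm) integrable_density) (auto simp: t_def)
  have "(\<integral>x. g x \<partial>P) = (\<integral>x. t x * g x \<partial>Q)"
    unfolding P_density by (subst integral_density) (auto simp: t_def)
  then have "(\<integral>x. g x \<partial>P) / ln 2 = (\<integral>x. (t x * g x - exp (g x) + 1) / ln 2 \<partial>Q)"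
    using int_tg int_Q normalized by (simp add: Q.prob_space)
  also have "ennreal \<dots> \<le> (\<integral>\<^sup>+x. ennreal ((t x * g x - exp (g x) + 1) / ln 2) \<partial>Q)"
    using int_tg int_Q by (intro ennreal_integral_le_nn_integral) auto
  also have "\<dots> \<le> (\<integral>\<^sup>+x. ennreal ((t x * ln (t x) - t x + 1) / ln 2) \<partial>Q)"
    by (intro nn_integral_mono ennreal_leI divide_right_mono mult_sub_exp_le_entropy_term)
       (auto simp: t_def)
  also have "\<dots> = KL_div P Q"
    using ac sets_eq by (simp add: KL_div_def t_def Let_def)
  finally show ?thesis .
qed

lemma KL_div_density_exp:
  assumes P: "prob_space P" and Q: "prob_space Q"
    and [measurable]: "g \<in> borel_measurable Q"
    and P_density: "P = density Q (\<lambda>x. ennreal (exp (g x)))"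
    and int_P: "integrable P g"
  shows "KL_div P Q = ennreal ((\<integral>x. g x \<partial>P) / ln 2)"
proof -
  interpret Q: prob_space Q by fact
  interpret P: prob_space P by fact
  have sets_eq: "sets P = sets Q" using P_density by simp
  have ac: "absolutely_continuous Q P"
    unfolding P_density by (intro absolutely_continuousI_density) simp
  have "AE x in Q. ennreal (exp (g x)) = RN_deriv Q P x"
    unfolding P_density by (intro Q.RN_deriv_unique) auto
  then have RN: "AE x in Q. enn2real (RN_deriv Q P x) = exp (g x)"
    by eventually_elim (metis enn2real_ennreal exp_ge_zero)
  have int_eg: "integrable Q (\<lambda>x. exp (g x) * g x)"
    using int_P unfolding P_density by (subst (asm) integrable_density) auto
  have "emeasure P (space P) = 1" by (rule P.emeasure_space_1)
  then have nn_one: "(\<integral>\<^sup>+x. ennreal (exp (g x)) \<partial>Q) = 1"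
    unfolding P_density by (simp add: emeasure_density)
  have int_Q: "integrable Q (\<lambda>x. exp (g x))"
    using nn_one by (intro integrableI_nonneg) auto
  have one: "(\<integral>x. exp (g x) \<partial>Q) = 1"
    using nn_one int_Q by (subst (asm) nn_integral_eq_integral) auto
  define h where "h x = (exp (g x) * g x - exp (g x) + 1) / ln 2" for x
  have int_h: "integrable Q h"
    unfolding h_def using int_eg int_Q by auto
  have h_nonneg: "0 \<le> h x" for x
    using mult_sub_exp_le_entropy_term[of "exp (g x)" 0] unfolding h_def by simp
  have "(\<integral>x. g x \<partial>P) = (\<integral>x. exp (g x) * g x \<partial>Q)"
    unfolding P_density by (subst integral_density) auto
  then have int_eq: "(\<integral>x. h x \<partial>Q) = (\<integral>x. g x \<partial>P) / ln 2"
    unfolding h_def using int_eg int_Q one by (simp add: Q.prob_space)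
  have "KL_div P Q = (\<integral>\<^sup>+x. ennreal ((enn2real (RN_deriv Q P x) * ln (enn2real (RN_deriv Q P x))
        - enn2real (RN_deriv Q P x) + 1) / ln 2) \<partial>Q)"
    using ac sets_eq by (simp add: KL_div_def Let_def)
  also have "\<dots> = (\<integral>\<^sup>+x. ennreal (h x) \<partial>Q)"
    using RN by (intro nn_integral_cong_AE) (auto simp: h_def)
  also have "\<dots> = ennreal ((\<integral>x. g x \<partial>P) / ln 2)"
    using int_h h_nonneg int_eq by (subst nn_integral_eq_integral) auto
  finally show ?thesis .
qed

lemma measurable_kernel_Pair:
  assumes K: "K \<in> A \<rightarrow>\<^sub>M prob_algebra N"
  shows "(\<lambda>x. distr (K x) (A \<Otimes>\<^sub>M N) (Pair x)) \<in> A \<rightarrow>\<^sub>M prob_algebra (A \<Otimes>\<^sub>M N)"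
  by (rule measurable_distr_prob_space2[OF K]) simp

lemma prob_space_kernel_value:
  "K \<in> A \<rightarrow>\<^sub>M prob_algebra N \<Longrightarrow> x \<in> space A \<Longrightarrow> prob_space (K x) \<and> sets (K x) = sets N"
  using measurable_space[of K A "prob_algebra N"] by (simp add: space_prob_algebra)

context
  fixes M :: "'a measure" and A :: "'a measure" and N :: "'b measure" and K :: "'a \<Rightarrow> 'b measure"
  assumes prob_M: "prob_space M" and sets_M: "sets M = sets A"
    and K [measurable]: "K \<in> A \<rightarrow>\<^sub>M prob_algebra N"
begin

lemma source_in_space_prob_algebra: "M \<in> space (prob_algebra A)"
  using prob_M sets_M by (simp add: space_prob_algebra)

lemma prob_space_kernel_joint: "prob_space (M \<bind> (\<lambda>x. distr (K x) (A \<Otimes>\<^sub>M N) (Pair x)))"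
  by (rule prob_space_bind'[OF source_in_space_prob_algebra measurable_kernel_Pair[OF K]])

lemma sets_kernel_joint: "sets (M \<bind> (\<lambda>x. distr (K x) (A \<Otimes>\<^sub>M N) (Pair x))) = sets (A \<Otimes>\<^sub>M N)"
  by (rule sets_bind'[OF source_in_space_prob_algebra measurable_kernel_Pair[OF K]])

lemma nn_integral_kernel_joint:
  assumes [measurable]: "F \<in> borel_measurable (A \<Otimes>\<^sub>M N)"
  shows "(\<integral>\<^sup>+z. F z \<partial>(M \<bind> (\<lambda>x. distr (K x) (A \<Otimes>\<^sub>M N) (Pair x)))) =
         (\<integral>\<^sup>+x. \<integral>\<^sup>+y. F (x, y) \<partial>K x \<partial>M)"
proof -
  have kernel: "(\<lambda>x. distr (K x) (A \<Otimes>\<^sub>M N) (Pair x)) \<in> M \<rightarrow>\<^sub>M subprob_algebra (A \<Otimes>\<^sub>M N)"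
    using measurable_prob_algebraD[OF measurable_kernel_Pair[OF K]]
    by (simp cong: measurable_cong_sets add: sets_M)
  have "(\<integral>\<^sup>+z. F z \<partial>(M \<bind> (\<lambda>x. distr (K x) (A \<Otimes>\<^sub>M N) (Pair x)))) =
      (\<integral>\<^sup>+x. \<integral>\<^sup>+z. F z \<partial>distr (K x) (A \<Otimes>\<^sub>M N) (Pair x) \<partial>M)"
    by (rule nn_integral_bind[OF _ kernel]) simp
  also have "\<dots> = (\<integral>\<^sup>+x. \<integral>\<^sup>+y. F (x, y) \<partial>K x \<partial>M)"
  proof (intro nn_integral_cong)
    fix x assume "x \<in> space M"
    then have x: "x \<in> space A" using sets_eq_imp_space_eq[OF sets_M] by blast
    have "Pair x \<in> K x \<rightarrow>\<^sub>M A \<Otimes>\<^sub>M N"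
      using x prob_space_kernel_value[OF K x] by (simp cong: measurable_cong_sets)
    then show "(\<integral>\<^sup>+z. F z \<partial>distr (K x) (A \<Otimes>\<^sub>M N) (Pair x)) = (\<integral>\<^sup>+y. F (x, y) \<partial>K x)"
      by (subst nn_integral_distr) auto
  qed
  finally show ?thesis .
qed

lemma distr_fst_kernel_joint: "distr (M \<bind> (\<lambda>x. distr (K x) (A \<Otimes>\<^sub>M N) (Pair x))) A fst = M"
proof (rule measure_eqI)
  let ?J = "M \<bind> (\<lambda>x. distr (K x) (A \<Otimes>\<^sub>M N) (Pair x))"
  show "sets (distr ?J A fst) = sets M" by (simp add: sets_M)
  fix X assume "X \<in> sets (distr ?J A fst)"
  then have X [measurable]: "X \<in> sets A" by simp
  have "fst \<in> ?J \<rightarrow>\<^sub>M A" by (simp add: sets_kernel_joint cong: measurable_cong_sets)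
  then have "emeasure (distr ?J A fst) X = (\<integral>\<^sup>+z. indicator X (fst z) \<partial>?J)"
    by (subst nn_integral_distr[symmetric]) auto
  also have "\<dots> = (\<integral>\<^sup>+x. \<integral>\<^sup>+y. indicator X x \<partial>K x \<partial>M)"
    by (subst nn_integral_kernel_joint) auto
  also have "\<dots> = (\<integral>\<^sup>+x. indicator X x \<partial>M)"
  proof (intro nn_integral_cong)
    fix x assume "x \<in> space M"
    then have "x \<in> space A" using sets_eq_imp_space_eq[OF sets_M] by blast
    then interpret prob_space "K x" using prob_space_kernel_value[OF K] by blast
    show "(\<integral>\<^sup>+y. indicator X x \<partial>K x) = indicator X x" by (simp add: emeasure_space_1)
  qed
  also have "\<dots> = emeasure M X" using X sets_M by simp
  finally show "emeasure (distr ?J A fst) X = emeasure M X" .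
qed

end

section \<open>Mutual information with a Gaussian source\<close>

context
  fixes J :: "(real \<times> 'b) measure" and M :: "'b measure" and \<mu> \<sigma> :: real
    and m :: "'b \<Rightarrow> real"
  assumes \<sigma>_pos: "\<sigma> > 0" and prob_J: "prob_space J" and sets_J: "sets J = sets (borel \<Otimes>\<^sub>M M)"
    and law_fst: "distr J borel fst = gaussian \<mu> \<sigma>"
    and m [measurable]: "m \<in> borel_measurable M"
    and int_err: "integrable J (\<lambda>z. (fst z - m (snd z))\<^sup>2)"
begin

text \<open>The test function of \<open>KL_div_ge_integral\<close> is the log-likelihood ratio of the
  channel \<open>X | U = u \<sim> N(m u, v)\<close> against the source \<open>N(\<mu>, \<sigma>\<^sup>2)\<close>.\<close>

lemma mutual_info_ge_estimation_error:
  assumes v_pos: "v > 0"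
  shows "ennreal ((ln \<sigma> - ln (sqrt v) - (\<integral>z. (fst z - m (snd z))\<^sup>2 \<partial>J) / (2 * v) + 1/2) / ln 2)
         \<le> mutual_info borel M J"
proof -
  interpret J: prob_space J by (fact prob_J)
  define J2 where "J2 = distr J M snd"
  have prob_J2: "prob_space J2"
    unfolding J2_def by (intro J.prob_space_distr) (simp add: sets_J cong: measurable_cong_sets)
  interpret J2: prob_space J2 by (fact prob_J2)
  interpret G: prob_space "gaussian \<mu> \<sigma>" using prob_space_gaussian[OF \<sigma>_pos] .
  interpret GJ: pair_sigma_finite "gaussian \<mu> \<sigma>" J2 ..
  define Q where "Q = gaussian \<mu> \<sigma> \<Otimes>\<^sub>M J2"
  have prob_Q: "prob_space Q"
    unfolding Q_def by (intro prob_space_pair) (simp_all add: prob_space_gaussian \<sigma>_pos prob_J2)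
  have sets_Q: "sets Q = sets (borel \<Otimes>\<^sub>M M)"
    unfolding Q_def by (intro sets_pair_measure_cong) (simp_all add: J2_def)
  define g where
    "g z = ln \<sigma> - ln (sqrt v) - (fst z - m (snd z))\<^sup>2 / (2 * v) + (fst z - \<mu>)\<^sup>2 / (2 * \<sigma>\<^sup>2)" for z
  have g_Q: "g \<in> borel_measurable Q" unfolding g_def by (simp add: sets_Q cong: measurable_cong_sets)
  have fst_J: "fst \<in> J \<rightarrow>\<^sub>M borel" by (simp add: sets_J cong: measurable_cong_sets)
  note source = gaussian_marginal_second_moment[OF \<sigma>_pos fst_J law_fst]
  have int_g: "integrable J g"
    unfolding g_def using int_err source(1) by (intro Bochner_Integration.integrable_add
        Bochner_Integration.integrable_diff integrable_divide_zero J.integrable_const) auto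
  have integral_g:
    "(\<integral>z. g z \<partial>J) = ln \<sigma> - ln (sqrt v) - (\<integral>z. (fst z - m (snd z))\<^sup>2 \<partial>J) / (2 * v) + 1/2"
    unfolding g_def using int_err source \<sigma>_pos by (simp add: J.prob_space)
  have nn_one: "(\<integral>\<^sup>+z. ennreal (exp (g z)) \<partial>Q) = 1"
  proof -
    have "(\<integral>\<^sup>+z. ennreal (exp (g z)) \<partial>Q) = (\<integral>\<^sup>+u. \<integral>\<^sup>+x. ennreal (exp (g (x, u))) \<partial>gaussian \<mu> \<sigma> \<partial>J2)"
      using g_Q unfolding Q_def by (subst GJ.nn_integral_snd[symmetric]) auto
    also have "\<dots> = (\<integral>\<^sup>+u. 1 \<partial>J2)"
      unfolding g_def by (simp add: nn_integral_gaussian_exp_log_likelihood_ratio[OF \<sigma>_pos v_pos])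
    also have "\<dots> = 1" by (simp add: J2.emeasure_space_1)
    finally show ?thesis .
  qed
  have int_exp: "integrable Q (\<lambda>z. exp (g z))"
    using nn_one g_Q by (intro integrableI_nonneg) auto
  have "(\<integral>z. exp (g z) \<partial>Q) = 1"
    using nn_one int_exp by (subst (asm) nn_integral_eq_integral) auto
  then have "ennreal ((\<integral>z. g z \<partial>J) / ln 2) \<le> KL_div J Q"
    by (intro KL_div_ge_integral[OF prob_J prob_Q _ g_Q int_g int_exp]) (simp add: sets_J sets_Q)
  moreover have "distr J borel fst \<Otimes>\<^sub>M distr J M snd = Q"
    unfolding Q_def J2_def law_fst ..
  ultimately show ?thesis unfolding mutual_info_def integral_g by simp
qed

lemma mutual_info_ge_half_log_variance_ratio:
  assumes err: "(\<integral>z. (fst z - m (snd z))\<^sup>2 \<partial>J) \<le> c" and c_pos: "c > 0"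
  shows "ennreal (1/2 * log 2 (\<sigma>\<^sup>2 / c)) \<le> mutual_info borel M J"
proof -
  have "(\<integral>z. (fst z - m (snd z))\<^sup>2 \<partial>J) / (2 * c) \<le> 1/2"
    using err c_pos by (simp add: field_simps)
  moreover have "ln (\<sigma>\<^sup>2 / c) = 2 * (ln \<sigma> - ln (sqrt c))"
    using \<sigma>_pos c_pos by (simp add: ln_div ln_sqrt power2_eq_square ln_mult)
  ultimately have "1/2 * log 2 (\<sigma>\<^sup>2 / c)
      \<le> (ln \<sigma> - ln (sqrt c) - (\<integral>z. (fst z - m (snd z))\<^sup>2 \<partial>J) / (2 * c) + 1/2) / ln 2"
    unfolding log_def by (simp add: divide_right_mono field_simps)
  then show ?thesis
    using mutual_info_ge_estimation_error[OF c_pos] by (blast intro: order_trans ennreal_leI)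
qed

lemma mutual_info_eq_top_if_exact_estimation:
  assumes err: "(\<integral>z. (fst z - m (snd z))\<^sup>2 \<partial>J) \<le> 0"
  shows "mutual_info borel M J = \<top>"
proof (rule ennreal_eq_top_if_ge_of_nat)
  fix n :: nat
  define v where "v = (\<sigma> / 2 ^ n)\<^sup>2"
  have v_pos: "v > 0" using \<sigma>_pos by (simp add: v_def)
  have "ln \<sigma> - ln (sqrt v) = real n * ln 2"
    using \<sigma>_pos by (simp add: v_def ln_div ln_realpow)
  moreover have "(\<integral>z. (fst z - m (snd z))\<^sup>2 \<partial>J) / (2 * v) \<le> 0"
    using err v_pos by (simp add: divide_nonpos_pos)
  ultimately have "real n \<le> (ln \<sigma> - ln (sqrt v) - (\<integral>z. (fst z - m (snd z))\<^sup>2 \<partial>J) / (2 * v) + 1/2) / ln 2"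
    by (simp add: field_simps)
  then show "ennreal (real n) \<le> mutual_info borel M J"
    using mutual_info_ge_estimation_error[OF v_pos] by (blast intro: order_trans ennreal_leI)
qed

end

section \<open>The bivariate Gaussian with correlation \<open>r\<close>\<close>

definition resid_std :: "real \<Rightarrow> real \<Rightarrow> real" where
  "resid_std \<sigma> r = \<sigma> * sqrt (1 - r\<^sup>2)"

definition gauss_channel :: "real \<Rightarrow> real \<Rightarrow> real \<Rightarrow> real \<Rightarrow> real measure" where
  "gauss_channel \<mu> \<sigma> r x = gaussian (\<mu> + r * (x - \<mu>)) (resid_std \<sigma> r)"

text \<open>The law of \<open>(X, Y)\<close> with \<open>X \<sim> N(\<mu>, \<sigma>\<^sup>2)\<close> and \<open>Y = \<mu> + r (X - \<mu>) + Z\<close>,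
  \<open>Z \<sim> N(0, \<sigma>\<^sup>2 (1 - r\<^sup>2))\<close> independent: jointly Gaussian with both marginals \<open>N(\<mu>, \<sigma>\<^sup>2)\<close>
  and correlation \<open>r\<close>.\<close>

definition gauss_pair :: "real \<Rightarrow> real \<Rightarrow> real \<Rightarrow> (real \<times> real) measure" where
  "gauss_pair \<mu> \<sigma> r = gaussian \<mu> \<sigma> \<bind> (\<lambda>x. distr (gauss_channel \<mu> \<sigma> r x) (borel \<Otimes>\<^sub>M borel) (Pair x))"

definition gauss_pair_density :: "real \<Rightarrow> real \<Rightarrow> real \<Rightarrow> real \<Rightarrow> real \<Rightarrow> real" where
  "gauss_pair_density \<mu> \<sigma> r x y =
     normal_density \<mu> \<sigma> x * normal_density (\<mu> + r * (x - \<mu>)) (resid_std \<sigma> r) y"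

text \<open>The log-density of \<open>gauss_pair \<mu> \<sigma> r\<close> with respect to the product of its marginals.\<close>

definition gauss_pair_log_density :: "real \<Rightarrow> real \<Rightarrow> real \<Rightarrow> real \<times> real \<Rightarrow> real" where
  "gauss_pair_log_density \<mu> \<sigma> r z = ln \<sigma> - ln (resid_std \<sigma> r)
     - (fst z - (\<mu> + r * (snd z - \<mu>)))\<^sup>2 / (2 * (resid_std \<sigma> r)\<^sup>2) + (fst z - \<mu>)\<^sup>2 / (2 * \<sigma>\<^sup>2)"

lemma measurable_gauss_pair_log_density [measurable]:
  "gauss_pair_log_density \<mu> \<sigma> r \<in> borel_measurable (borel \<Otimes>\<^sub>M borel)"
  unfolding gauss_pair_log_density_def by measurable

lemma measurable_gauss_pair_density [measurable]:
  "(\<lambda>(x, y). gauss_pair_density \<mu> \<sigma> r x y) \<in> borel_measurable (borel \<Otimes>\<^sub>M borel)"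
  unfolding gauss_pair_density_def normal_density_def by measurable

lemma sets_gauss_channel [simp, measurable_cong]: "sets (gauss_channel \<mu> \<sigma> r x) = sets borel"
  by (simp add: gauss_channel_def)

context
  fixes \<mu> \<sigma> r :: real
  assumes \<sigma>_pos: "\<sigma> > 0" and r: "\<bar>r\<bar> < 1"
begin

lemma one_minus_square_pos: "1 - r\<^sup>2 > 0"
  using r by (simp add: abs_square_less_1)

lemma resid_std_pos: "resid_std \<sigma> r > 0"
  using \<sigma>_pos one_minus_square_pos unfolding resid_std_def by simp

lemma resid_std_square: "(resid_std \<sigma> r)\<^sup>2 = \<sigma>\<^sup>2 * (1 - r\<^sup>2)"
  using one_minus_square_pos unfolding resid_std_def by (simp add: power_mult_distrib)

lemma prob_space_gauss_channel: "prob_space (gauss_channel \<mu> \<sigma> r x)"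
  unfolding gauss_channel_def using resid_std_pos by (rule prob_space_gaussian)

lemma nn_integral_gauss_channel_affine_square:
  "(\<integral>\<^sup>+y. ennreal ((\<alpha> + \<beta> * y)\<^sup>2) \<partial>gauss_channel \<mu> \<sigma> r x)
     = ennreal ((\<alpha> + \<beta> * (\<mu> + r * (x - \<mu>)))\<^sup>2 + \<beta>\<^sup>2 * \<sigma>\<^sup>2 * (1 - r\<^sup>2))"
  unfolding gauss_channel_def nn_integral_gaussian_affine_square[OF resid_std_pos] resid_std_square
  by (simp add: mult.assoc)

lemma measurable_gauss_channel [measurable]: "gauss_channel \<mu> \<sigma> r \<in> borel \<rightarrow>\<^sub>M prob_algebra borel"
proof (rule measurable_prob_algebraI)
  show "prob_space (gauss_channel \<mu> \<sigma> r x)" for x by (rule prob_space_gauss_channel)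
  show "gauss_channel \<mu> \<sigma> r \<in> borel \<rightarrow>\<^sub>M subprob_algebra borel"
  proof (rule measurable_subprob_algebra)
    show "subprob_space (gauss_channel \<mu> \<sigma> r x)" for x
      using prob_space_gauss_channel prob_space_imp_subprob_space by blast
    fix X :: "real set" assume [measurable]: "X \<in> sets borel"
    have "emeasure (gauss_channel \<mu> \<sigma> r x) X =
          (\<integral>\<^sup>+y. ennreal (normal_density (\<mu> + r * (x - \<mu>)) (resid_std \<sigma> r) y) * indicator X y \<partial>lborel)"
      for x unfolding gauss_channel_def gaussian_def by (subst emeasure_density) auto
    moreover have "(\<lambda>x. \<integral>\<^sup>+y. ennreal (normal_density (\<mu> + r * (x - \<mu>)) (resid_std \<sigma> r) y)
                      * indicator X y \<partial>lborel) \<in> borel_measurable borel"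
      unfolding normal_density_def by measurable
    ultimately show "(\<lambda>x. emeasure (gauss_channel \<mu> \<sigma> r x) X) \<in> borel_measurable borel" by simp
  qed simp
qed

lemma gauss_pair_density_commute: "gauss_pair_density \<mu> \<sigma> r x y = gauss_pair_density \<mu> \<sigma> r y x"
proof -
  define s where "s = resid_std \<sigma> r"
  have s_sq: "s\<^sup>2 = \<sigma>\<^sup>2 * (1 - r\<^sup>2)" unfolding s_def by (rule resid_std_square)
  have exponent: "(x - \<mu>)\<^sup>2 / (2 * \<sigma>\<^sup>2) + (y - (\<mu> + r * (x - \<mu>)))\<^sup>2 / (2 * s\<^sup>2) =
                  (y - \<mu>)\<^sup>2 / (2 * \<sigma>\<^sup>2) + (x - (\<mu> + r * (y - \<mu>)))\<^sup>2 / (2 * s\<^sup>2)"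
    unfolding s_sq using \<sigma>_pos one_minus_square_pos by (simp add: field_simps power2_eq_square)
  have density: "gauss_pair_density \<mu> \<sigma> r a b = 1 / sqrt (2 * pi * \<sigma>\<^sup>2) * (1 / sqrt (2 * pi * s\<^sup>2)) *
      exp (- ((a - \<mu>)\<^sup>2 / (2 * \<sigma>\<^sup>2) + (b - (\<mu> + r * (a - \<mu>)))\<^sup>2 / (2 * s\<^sup>2)))" for a b
    unfolding gauss_pair_density_def normal_density_def s_def by (simp add: exp_add[symmetric] mult_ac)
  show ?thesis unfolding density exponent ..
qed

lemma prob_space_gauss_pair: "prob_space (gauss_pair \<mu> \<sigma> r)"
  and sets_gauss_pair [measurable_cong]: "sets (gauss_pair \<mu> \<sigma> r) = sets (borel \<Otimes>\<^sub>M borel)"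
  and distr_fst_gauss_pair: "distr (gauss_pair \<mu> \<sigma> r) borel fst = gaussian \<mu> \<sigma>"
  unfolding gauss_pair_def
  by (rule prob_space_kernel_joint sets_kernel_joint distr_fst_kernel_joint;
      simp add: prob_space_gaussian \<sigma>_pos)+

lemma nn_integral_gauss_pair:
  assumes [measurable]: "F \<in> borel_measurable (borel \<Otimes>\<^sub>M borel)"
  shows "(\<integral>\<^sup>+z. F z \<partial>gauss_pair \<mu> \<sigma> r) = (\<integral>\<^sup>+x. \<integral>\<^sup>+y. F (x, y) \<partial>gauss_channel \<mu> \<sigma> r x \<partial>gaussian \<mu> \<sigma>)"
  unfolding gauss_pair_def by (rule nn_integral_kernel_joint) (simp_all add: prob_space_gaussian \<sigma>_pos)

lemma nn_integral_gauss_pair_lborel: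
  assumes [measurable]: "F \<in> borel_measurable (borel \<Otimes>\<^sub>M borel)"
  shows "(\<integral>\<^sup>+z. F z \<partial>gauss_pair \<mu> \<sigma> r) =
         (\<integral>\<^sup>+x. \<integral>\<^sup>+y. ennreal (gauss_pair_density \<mu> \<sigma> r x y) * F (x, y) \<partial>lborel \<partial>lborel)"
proof -
  have "(\<integral>\<^sup>+z. F z \<partial>gauss_pair \<mu> \<sigma> r) = (\<integral>\<^sup>+x. \<integral>\<^sup>+y.
      ennreal (normal_density (\<mu> + r * (x - \<mu>)) (resid_std \<sigma> r) y) * F (x, y) \<partial>lborel \<partial>gaussian \<mu> \<sigma>)"
    unfolding nn_integral_gauss_pair[OF assms] gauss_channel_def
    by (intro nn_integral_cong nn_integral_gaussian) simp
  also have "\<dots> = (\<integral>\<^sup>+x. ennreal (normal_density \<mu> \<sigma> x) * \<integral>\<^sup>+y.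
      ennreal (normal_density (\<mu> + r * (x - \<mu>)) (resid_std \<sigma> r) y) * F (x, y) \<partial>lborel \<partial>lborel)"
    by (rule nn_integral_gaussian) (unfold normal_density_def, measurable)
  also have "\<dots> = (\<integral>\<^sup>+x. \<integral>\<^sup>+y. ennreal (gauss_pair_density \<mu> \<sigma> r x y) * F (x, y) \<partial>lborel \<partial>lborel)"
    by (subst nn_integral_cmult[symmetric]) (auto simp: gauss_pair_density_def ennreal_mult mult.assoc)
  finally show ?thesis .
qed

lemma nn_integral_gauss_pair_swap:
  assumes [measurable]: "F \<in> borel_measurable (borel \<Otimes>\<^sub>M borel)"
  shows "(\<integral>\<^sup>+z. F (snd z, fst z) \<partial>gauss_pair \<mu> \<sigma> r) = (\<integral>\<^sup>+z. F z \<partial>gauss_pair \<mu> \<sigma> r)"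
proof -
  have "(\<integral>\<^sup>+z. F (snd z, fst z) \<partial>gauss_pair \<mu> \<sigma> r) =
        (\<integral>\<^sup>+x. \<integral>\<^sup>+y. ennreal (gauss_pair_density \<mu> \<sigma> r x y) * F (y, x) \<partial>lborel \<partial>lborel)"
    by (subst nn_integral_gauss_pair_lborel) auto
  also have "\<dots> = (\<integral>\<^sup>+y. \<integral>\<^sup>+x. ennreal (gauss_pair_density \<mu> \<sigma> r x y) * F (y, x) \<partial>lborel \<partial>lborel)"
    by (rule lborel_pair.Fubini'[symmetric]) measurable
  also have "\<dots> = (\<integral>\<^sup>+z. F z \<partial>gauss_pair \<mu> \<sigma> r)"
    by (subst nn_integral_gauss_pair_lborel) (auto simp: gauss_pair_density_commute)
  finally show ?thesis .
qed

lemma gauss_channel_stationary: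
  assumes [measurable]: "G \<in> borel_measurable borel"
  shows "(\<integral>\<^sup>+x. \<integral>\<^sup>+y. G y \<partial>gauss_channel \<mu> \<sigma> r x \<partial>gaussian \<mu> \<sigma>) = (\<integral>\<^sup>+y. G y \<partial>gaussian \<mu> \<sigma>)"
proof -
  have "(\<integral>\<^sup>+x. \<integral>\<^sup>+y. G y \<partial>gauss_channel \<mu> \<sigma> r x \<partial>gaussian \<mu> \<sigma>) = (\<integral>\<^sup>+z. G (snd z) \<partial>gauss_pair \<mu> \<sigma> r)"
    by (subst nn_integral_gauss_pair) auto
  also have "\<dots> = (\<integral>\<^sup>+z. G (fst z) \<partial>gauss_pair \<mu> \<sigma> r)"
    using nn_integral_gauss_pair_swap[of "\<lambda>z. G (fst z)"] by simp
  also have "\<dots> = (\<integral>\<^sup>+y. G y \<partial>gaussian \<mu> \<sigma>)"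
    by (subst nn_integral_gauss_pair)
       (auto simp: prob_space.emeasure_space_1[OF prob_space_gauss_channel])
  finally show ?thesis .
qed

lemma distr_snd_gauss_pair: "distr (gauss_pair \<mu> \<sigma> r) borel snd = gaussian \<mu> \<sigma>"
proof (rule measure_eqI)
  fix X assume "X \<in> sets (distr (gauss_pair \<mu> \<sigma> r) borel snd)"
  then have [measurable]: "X \<in> sets borel" by simp
  have "emeasure (distr (gauss_pair \<mu> \<sigma> r) borel snd) X =
        (\<integral>\<^sup>+z. indicator X z \<partial>distr (gauss_pair \<mu> \<sigma> r) borel snd)"
    by simp
  also have "\<dots> = (\<integral>\<^sup>+z. indicator X (snd z) \<partial>gauss_pair \<mu> \<sigma> r)"
    by (rule nn_integral_distr) (simp_all add: sets_gauss_pair cong: measurable_cong_sets)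
  also have "\<dots> = (\<integral>\<^sup>+x. \<integral>\<^sup>+y. indicator X y \<partial>gauss_channel \<mu> \<sigma> r x \<partial>gaussian \<mu> \<sigma>)"
    by (subst nn_integral_gauss_pair) auto
  also have "\<dots> = emeasure (gaussian \<mu> \<sigma>) X"
    by (subst gauss_channel_stationary) auto
  finally show "emeasure (distr (gauss_pair \<mu> \<sigma> r) borel snd) X = emeasure (gaussian \<mu> \<sigma>) X" .
qed simp

lemma gauss_pair_square_distortion:
  "(\<integral>\<^sup>+z. ennreal ((fst z - snd z)\<^sup>2) \<partial>gauss_pair \<mu> \<sigma> r) = ennreal (2 * \<sigma>\<^sup>2 * (1 - r))"
proof -
  have "(\<integral>\<^sup>+z. ennreal ((fst z - snd z)\<^sup>2) \<partial>gauss_pair \<mu> \<sigma> r) =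
      (\<integral>\<^sup>+x. \<integral>\<^sup>+y. ennreal ((x + (-1) * y)\<^sup>2) \<partial>gauss_channel \<mu> \<sigma> r x \<partial>gaussian \<mu> \<sigma>)"
    by (subst nn_integral_gauss_pair) auto
  also have "\<dots> = (\<integral>\<^sup>+x. ennreal ((- (1 - r) * \<mu> + (1 - r) * x)\<^sup>2 + \<sigma>\<^sup>2 * (1 - r\<^sup>2)) \<partial>gaussian \<mu> \<sigma>)"
    unfolding nn_integral_gauss_channel_affine_square
    by (intro nn_integral_cong) (simp add: algebra_simps power2_eq_square)
  also have "\<dots> = (\<integral>\<^sup>+x. ennreal ((- (1 - r) * \<mu> + (1 - r) * x)\<^sup>2) + ennreal (\<sigma>\<^sup>2 * (1 - r\<^sup>2)) \<partial>gaussian \<mu> \<sigma>)"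
    using one_minus_square_pos by (intro nn_integral_cong ennreal_plus) auto
  also have "\<dots> = (\<integral>\<^sup>+x. ennreal ((- (1 - r) * \<mu> + (1 - r) * x)\<^sup>2) \<partial>gaussian \<mu> \<sigma>)
                    + ennreal (\<sigma>\<^sup>2 * (1 - r\<^sup>2))"
    using emeasure_gaussian_UNIV[OF \<sigma>_pos] by (subst nn_integral_add) auto
  also have "\<dots> = ennreal (((1 - r) * \<sigma>)\<^sup>2) + ennreal (\<sigma>\<^sup>2 * (1 - r\<^sup>2))"
    by (subst nn_integral_gaussian_affine_square[OF \<sigma>_pos]) (simp add: power2_eq_square algebra_simps)
  also have "\<dots> = ennreal (((1 - r) * \<sigma>)\<^sup>2 + \<sigma>\<^sup>2 * (1 - r\<^sup>2))"
    using one_minus_square_pos by (intro ennreal_plus[symmetric]) auto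
  also have "((1 - r) * \<sigma>)\<^sup>2 + \<sigma>\<^sup>2 * (1 - r\<^sup>2) = 2 * \<sigma>\<^sup>2 * (1 - r)"
    by (simp add: algebra_simps power2_eq_square)
  finally show ?thesis .
qed

lemma normal_density_mult_exp_gauss_pair_log_density:
  "normal_density \<mu> \<sigma> x * normal_density \<mu> \<sigma> y * exp (gauss_pair_log_density \<mu> \<sigma> r (x, y)) =
   gauss_pair_density \<mu> \<sigma> r x y"
proof -
  have "normal_density \<mu> \<sigma> x * exp (gauss_pair_log_density \<mu> \<sigma> r (x, y)) =
        normal_density (\<mu> + r * (y - \<mu>)) (resid_std \<sigma> r) x"
    using normal_density_mult_exp_log_likelihood_ratio[OF \<sigma>_pos, of "(resid_std \<sigma> r)\<^sup>2" \<mu> x]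
      resid_std_pos by (simp add: gauss_pair_log_density_def)
  then have "normal_density \<mu> \<sigma> x * normal_density \<mu> \<sigma> y * exp (gauss_pair_log_density \<mu> \<sigma> r (x, y)) =
             gauss_pair_density \<mu> \<sigma> r y x"
    by (simp add: gauss_pair_density_def mult_ac)
  then show ?thesis by (simp add: gauss_pair_density_commute)
qed

lemma gauss_pair_eq_density:
  "gauss_pair \<mu> \<sigma> r = density (gaussian \<mu> \<sigma> \<Otimes>\<^sub>M gaussian \<mu> \<sigma>)
     (\<lambda>z. ennreal (exp (gauss_pair_log_density \<mu> \<sigma> r z)))" (is "_ = density ?Q ?f")
proof (rule measure_eqI)
  interpret G: prob_space "gaussian \<mu> \<sigma>" using prob_space_gaussian[OF \<sigma>_pos] .
  have sets_Q: "sets ?Q = sets (borel \<Otimes>\<^sub>M borel)" by (intro sets_pair_measure_cong) simp_all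
  then show "sets (gauss_pair \<mu> \<sigma> r) = sets (density ?Q ?f)" by (simp add: sets_gauss_pair)
  have f_Q: "?f \<in> borel_measurable ?Q" unfolding measurable_cong_sets[OF sets_Q refl] by simp
  fix A assume "A \<in> sets (gauss_pair \<mu> \<sigma> r)"
  then have A [measurable]: "A \<in> sets (borel \<Otimes>\<^sub>M borel)" by (simp add: sets_gauss_pair)
  have "emeasure (density ?Q ?f) A = (\<integral>\<^sup>+z. ?f z * indicator A z \<partial>?Q)"
    by (rule emeasure_density[OF f_Q]) (simp add: sets_Q)
  also have "\<dots> = (\<integral>\<^sup>+x. \<integral>\<^sup>+y. ?f (x, y) * indicator A (x, y) \<partial>gaussian \<mu> \<sigma> \<partial>gaussian \<mu> \<sigma>)"
    by (rule G.nn_integral_fst[symmetric]) (simp add: measurable_cong_sets[OF sets_Q refl])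
  also have "\<dots> = (\<integral>\<^sup>+x. ennreal (normal_density \<mu> \<sigma> x) * \<integral>\<^sup>+y. ennreal (normal_density \<mu> \<sigma> y) *
      (?f (x, y) * indicator A (x, y)) \<partial>lborel \<partial>lborel)"
    by (subst nn_integral_gaussian, measurable, subst nn_integral_gaussian, measurable)
  also have "\<dots> = (\<integral>\<^sup>+x. \<integral>\<^sup>+y. ennreal (gauss_pair_density \<mu> \<sigma> r x y) * indicator A (x, y) \<partial>lborel \<partial>lborel)"
    by (subst nn_integral_cmult[symmetric], measurable)
       (simp add: normal_density_mult_exp_gauss_pair_log_density[symmetric] ennreal_mult[symmetric]
        mult.assoc[symmetric])
  also have "\<dots> = emeasure (gauss_pair \<mu> \<sigma> r) A"
    by (subst nn_integral_gauss_pair_lborel[symmetric]) (auto simp: sets_gauss_pair)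
  finally show "emeasure (gauss_pair \<mu> \<sigma> r) A = emeasure (density ?Q ?f) A" ..
qed

lemma gauss_pair_regression_error:
  "integrable (gauss_pair \<mu> \<sigma> r) (\<lambda>z. (fst z - (\<mu> + r * (snd z - \<mu>)))\<^sup>2)"
  "(\<integral>z. (fst z - (\<mu> + r * (snd z - \<mu>)))\<^sup>2 \<partial>gauss_pair \<mu> \<sigma> r) = (resid_std \<sigma> r)\<^sup>2"
proof -
  have "(\<integral>\<^sup>+z. ennreal ((fst z - (\<mu> + r * (snd z - \<mu>)))\<^sup>2) \<partial>gauss_pair \<mu> \<sigma> r) =
        (\<integral>\<^sup>+z. ennreal ((snd z - (\<mu> + r * (fst z - \<mu>)))\<^sup>2) \<partial>gauss_pair \<mu> \<sigma> r)"
    using nn_integral_gauss_pair_swap[of "\<lambda>p. ennreal ((snd p - (\<mu> + r * (fst p - \<mu>)))\<^sup>2)"] by simp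
  also have "\<dots> = (\<integral>\<^sup>+x. \<integral>\<^sup>+y. ennreal ((- (\<mu> + r * (x - \<mu>)) + 1 * y)\<^sup>2)
                       \<partial>gauss_channel \<mu> \<sigma> r x \<partial>gaussian \<mu> \<sigma>)"
    by (subst nn_integral_gauss_pair) (auto intro!: nn_integral_cong simp: algebra_simps)
  also have "\<dots> = ennreal ((resid_std \<sigma> r)\<^sup>2)"
    unfolding nn_integral_gauss_channel_affine_square
    using emeasure_gaussian_UNIV[OF \<sigma>_pos] by (simp add: resid_std_square)
  finally have nn: "(\<integral>\<^sup>+z. ennreal ((fst z - (\<mu> + r * (snd z - \<mu>)))\<^sup>2) \<partial>gauss_pair \<mu> \<sigma> r) =
                    ennreal ((resid_std \<sigma> r)\<^sup>2)" .
  show "integrable (gauss_pair \<mu> \<sigma> r) (\<lambda>z. (fst z - (\<mu> + r * (snd z - \<mu>)))\<^sup>2)"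
    "(\<integral>z. (fst z - (\<mu> + r * (snd z - \<mu>)))\<^sup>2 \<partial>gauss_pair \<mu> \<sigma> r) = (resid_std \<sigma> r)\<^sup>2"
    by (auto intro!: nn_integral_eq_ennreal_imp_integral[OF _ _ nn]
        simp: sets_gauss_pair cong: measurable_cong_sets)
qed

lemma mutual_info_gauss_pair:
  "mutual_info borel borel (gauss_pair \<mu> \<sigma> r) = ennreal (1/2 * log 2 (1 / (1 - r\<^sup>2)))"
proof -
  let ?g = "gauss_pair_log_density \<mu> \<sigma> r"
  interpret P: prob_space "gauss_pair \<mu> \<sigma> r" by (rule prob_space_gauss_pair)
  define Q where "Q = gaussian \<mu> \<sigma> \<Otimes>\<^sub>M gaussian \<mu> \<sigma>"
  have "prob_space Q"
    unfolding Q_def by (intro prob_space_pair) (simp_all add: prob_space_gaussian \<sigma>_pos)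
  have g_Q: "?g \<in> borel_measurable Q"
    unfolding Q_def by (simp cong: measurable_cong_sets)
  note source = gaussian_marginal_second_moment[OF \<sigma>_pos _ distr_fst_gauss_pair]
  have int_g: "integrable (gauss_pair \<mu> \<sigma> r) ?g"
    unfolding gauss_pair_log_density_def using gauss_pair_regression_error(1) source(1)
    by (intro Bochner_Integration.integrable_add Bochner_Integration.integrable_diff
        integrable_divide_zero P.integrable_const) auto
  have "(\<integral>z. ?g z \<partial>gauss_pair \<mu> \<sigma> r) = ln \<sigma> - ln (resid_std \<sigma> r)"
    unfolding gauss_pair_log_density_def using gauss_pair_regression_error source resid_std_pos \<sigma>_pos
    by (simp add: P.prob_space)
  also have "\<dots> = - 1/2 * ln (1 - r\<^sup>2)"
    unfolding resid_std_def using \<sigma>_pos one_minus_square_pos by (simp add: ln_mult ln_sqrt)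
  finally have "KL_div (gauss_pair \<mu> \<sigma> r) Q = ennreal (1/2 * log 2 (1 / (1 - r\<^sup>2)))"
    using KL_div_density_exp[OF prob_space_gauss_pair \<open>prob_space Q\<close> g_Q _ int_g]
      gauss_pair_eq_density one_minus_square_pos
    by (simp add: Q_def log_def ln_div)
  moreover have "distr (gauss_pair \<mu> \<sigma> r) borel fst \<Otimes>\<^sub>M distr (gauss_pair \<mu> \<sigma> r) borel snd = Q"
    unfolding Q_def distr_fst_gauss_pair distr_snd_gauss_pair ..
  ultimately show ?thesis by (simp add: mutual_info_def)
qed

end

section \<open>The function \<open>phi\<close>\<close>

lemma le_phiI:
  assumes "\<sigma> > 0"
    and bound: "\<And>P. prob_space P \<Longrightarrow> sets P = sets (borel \<Otimes>\<^sub>M borel) \<Longrightarrow>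
        distr P borel fst = gaussian \<mu> \<sigma> \<Longrightarrow> distr P borel snd = gaussian \<mu> \<sigma> \<Longrightarrow>
        (\<integral>\<^sup>+z. ennreal ((fst z - snd z)\<^sup>2) \<partial>P) \<le> ennreal D \<Longrightarrow> B \<le> mutual_info borel borel P"
  shows "B \<le> phi \<mu> \<sigma> D"
  unfolding phi_def
proof (rule INF_greatest, clarsimp simp: Let_def)
  fix K :: "real \<Rightarrow> real measure"
  let ?P = "gaussian \<mu> \<sigma> \<bind> (\<lambda>x. distr (K x) (borel \<Otimes>\<^sub>M borel) (Pair x))"
  assume K: "K \<in> borel \<rightarrow>\<^sub>M prob_algebra borel"
    and "(\<integral>\<^sup>+z. ennreal ((fst z - snd z)\<^sup>2) \<partial>?P) \<le> ennreal D" "distr ?P borel snd = gaussian \<mu> \<sigma>"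
  moreover note prob_space_gaussian[OF \<open>\<sigma> > 0\<close>]
  ultimately show "B \<le> mutual_info borel borel ?P"
    by (intro bound prob_space_kernel_joint sets_kernel_joint distr_fst_kernel_joint) simp_all
qed

lemma phi_le_mutual_info_gauss_pair:
  assumes "\<sigma> > 0" "\<bar>r\<bar> < 1" "2 * \<sigma>\<^sup>2 * (1 - r) \<le> D"
  shows "phi \<mu> \<sigma> D \<le> ennreal (1/2 * log 2 (1 / (1 - r\<^sup>2)))"
proof -
  have "gauss_channel \<mu> \<sigma> r \<in> {K. K \<in> borel \<rightarrow>\<^sub>M prob_algebra borel \<and>
          (let P = gaussian \<mu> \<sigma> \<bind> (\<lambda>x. distr (K x) (borel \<Otimes>\<^sub>M borel) (\<lambda>y. (x, y))) in
             (\<integral>\<^sup>+z. ennreal ((fst z - snd z)\<^sup>2) \<partial>P) \<le> ennreal D \<and> distr P borel snd = gaussian \<mu> \<sigma>)}"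
    using assms measurable_gauss_channel gauss_pair_square_distortion distr_snd_gauss_pair
    by (auto simp: Let_def gauss_pair_def[symmetric] intro: ennreal_leI)
  then have "phi \<mu> \<sigma> D \<le> mutual_info borel borel (gauss_pair \<mu> \<sigma> r)"
    unfolding phi_def gauss_pair_def by (rule INF_lower)
  then show ?thesis
    using mutual_info_gauss_pair[OF assms(1,2)] by simp
qed

context
  fixes P :: "(real \<times> real) measure" and \<mu> \<sigma> D :: real
  assumes \<sigma>_pos: "\<sigma> > 0" and prob_P: "prob_space P" and sets_P: "sets P = sets (borel \<Otimes>\<^sub>M borel)"
    and law_fst: "distr P borel fst = gaussian \<mu> \<sigma>" and law_snd: "distr P borel snd = gaussian \<mu> \<sigma>"
    and distortion: "(\<integral>\<^sup>+z. ennreal ((fst z - snd z)\<^sup>2) \<partial>P) \<le> ennreal D" and "0 \<le> D"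
begin

lemma distortion_integral_le:
  "integrable P (\<lambda>z. (fst z - snd z)\<^sup>2)" "(\<integral>z. (fst z - snd z)\<^sup>2 \<partial>P) \<le> D"
  using nn_integral_le_ennreal_imp_integral[OF _ _ distortion \<open>0 \<le> D\<close>]
  by (simp_all add: sets_P cong: measurable_cong_sets)

lemma mutual_info_eq_top_if_no_distortion:
  assumes "D = 0"
  shows "mutual_info borel borel P = \<top>"
  by (rule mutual_info_eq_top_if_exact_estimation[OF \<sigma>_pos prob_P sets_P law_fst, where m="\<lambda>y. y"])
     (use distortion_integral_le assms in auto)

text \<open>Estimate \<open>X\<close> from the reconstruction \<open>Y\<close> by \<open>\<mu> + \<rho> (Y - \<mu>)\<close>, \<open>\<rho> = 1 - D / (2 \<sigma>\<^sup>2)\<close>: as both marginals are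
  \<open>N(\<mu>, \<sigma>\<^sup>2)\<close>, the squared error expands into the distortion and the two variances.\<close>

lemma mutual_info_ge_phi_value:
  assumes "0 < D" "D < 2 * \<sigma>\<^sup>2"
  shows "ennreal (1/2 * log 2 (4 * \<sigma>^4 / (4 * \<sigma>\<^sup>2 * D - D\<^sup>2))) \<le> mutual_info borel borel P"
proof -
  define \<rho> where "\<rho> = 1 - D / (2 * \<sigma>\<^sup>2)"
  have \<rho>: "0 < \<rho>" "\<rho> < 1" using assms \<sigma>_pos by (auto simp: \<rho>_def field_simps)
  define c where "c = \<sigma>\<^sup>2 * (1 - \<rho>\<^sup>2)"
  have c_pos: "c > 0" using \<rho> \<sigma>_pos by (simp add: c_def abs_square_less_1)
  have "fst \<in> P \<rightarrow>\<^sub>M borel" "snd \<in> P \<rightarrow>\<^sub>M borel" by (simp_all add: sets_P cong: measurable_cong_sets)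
  note var_fst = gaussian_marginal_second_moment[OF \<sigma>_pos \<open>fst \<in> P \<rightarrow>\<^sub>M borel\<close> law_fst]
    and var_snd = gaussian_marginal_second_moment[OF \<sigma>_pos \<open>snd \<in> P \<rightarrow>\<^sub>M borel\<close> law_snd]
  have expand: "(\<lambda>z. (fst z - (\<mu> + \<rho> * (snd z - \<mu>)))\<^sup>2) =
     (\<lambda>z. \<rho> * (fst z - snd z)\<^sup>2 + (1 - \<rho>) * (fst z - \<mu>)\<^sup>2 - \<rho> * (1 - \<rho>) * (snd z - \<mu>)\<^sup>2)"
    by (auto simp: fun_eq_iff algebra_simps power2_eq_square)
  have int_err: "integrable P (\<lambda>z. (fst z - (\<mu> + \<rho> * (snd z - \<mu>)))\<^sup>2)"
    unfolding expand using var_fst var_snd distortion_integral_le by auto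
  have "(\<integral>z. (fst z - (\<mu> + \<rho> * (snd z - \<mu>)))\<^sup>2 \<partial>P) =
        \<rho> * (\<integral>z. (fst z - snd z)\<^sup>2 \<partial>P) + (1 - \<rho>) * \<sigma>\<^sup>2 - \<rho> * (1 - \<rho>) * \<sigma>\<^sup>2"
    unfolding expand using var_fst var_snd distortion_integral_le by simp
  also have "\<dots> \<le> \<rho> * D + (1 - \<rho>) * \<sigma>\<^sup>2 - \<rho> * (1 - \<rho>) * \<sigma>\<^sup>2"
    using distortion_integral_le(2) \<rho> by simp
  also have "\<dots> = c"
    unfolding c_def \<rho>_def using \<sigma>_pos by (simp add: field_simps power2_eq_square)
  finally have "ennreal (1/2 * log 2 (\<sigma>\<^sup>2 / c)) \<le> mutual_info borel borel P"
    by (intro mutual_info_ge_half_log_variance_ratio[OF \<sigma>_pos prob_P sets_P law_fst _ int_err] c_pos)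
       simp
  moreover have "c = (4 * \<sigma>\<^sup>2 * D - D\<^sup>2) / (4 * \<sigma>\<^sup>2)"
    unfolding c_def \<rho>_def using \<sigma>_pos by (simp add: field_simps power2_eq_square)
  then have "\<sigma>\<^sup>2 / c = 4 * \<sigma>^4 / (4 * \<sigma>\<^sup>2 * D - D\<^sup>2)"
    using \<sigma>_pos by (simp add: power4_eq_xxxx power2_eq_square)
  ultimately show ?thesis by simp
qed

end

context
  fixes \<mu> \<sigma> :: real
  assumes \<sigma>_pos: "\<sigma> > 0"
begin

lemma phi_at_zero: "phi \<mu> \<sigma> 0 = \<infinity>"
  using le_phiI[OF \<sigma>_pos, of \<mu> 0 \<top>] mutual_info_eq_top_if_no_distortion[OF \<sigma>_pos]
  by (simp add: top_unique)

lemma phi_eq: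
  assumes "0 < D" "D < 2 * \<sigma>\<^sup>2"
  shows "phi \<mu> \<sigma> D = ennreal (1/2 * log 2 (4 * \<sigma>^4 / (4 * \<sigma>\<^sup>2 * D - D\<^sup>2)))"
proof (rule antisym)
  define r where "r = 1 - D / (2 * \<sigma>\<^sup>2)"
  have "\<bar>r\<bar> < 1" using assms \<sigma>_pos by (auto simp: r_def field_simps)
  moreover have "2 * \<sigma>\<^sup>2 * (1 - r) = D" using \<sigma>_pos by (simp add: r_def)
  moreover have "1 / (1 - r\<^sup>2) = 4 * \<sigma>^4 / (4 * \<sigma>\<^sup>2 * D - D\<^sup>2)"
    unfolding r_def using \<sigma>_pos by (simp add: field_simps power2_eq_square power4_eq_xxxx)
  ultimately show "phi \<mu> \<sigma> D \<le> ennreal (1/2 * log 2 (4 * \<sigma>^4 / (4 * \<sigma>\<^sup>2 * D - D\<^sup>2)))"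
    using phi_le_mutual_info_gauss_pair[OF \<sigma>_pos, of r D \<mu>] by simp
  show "ennreal (1/2 * log 2 (4 * \<sigma>^4 / (4 * \<sigma>\<^sup>2 * D - D\<^sup>2))) \<le> phi \<mu> \<sigma> D"
    using assms by (intro le_phiI[OF \<sigma>_pos] mutual_info_ge_phi_value[OF \<sigma>_pos]) auto
qed

lemma phi_eq_0_if_ge:
  assumes "2 * \<sigma>\<^sup>2 \<le> D"
  shows "phi \<mu> \<sigma> D = 0"
  using phi_le_mutual_info_gauss_pair[OF \<sigma>_pos, of 0 D] assms by simp

end

section \<open>The function \<open>varphi\<close>\<close>

definition xu_law :: "real \<Rightarrow> real \<Rightarrow> 'u topology \<Rightarrow> (real \<Rightarrow> ('u \<times> real) measure) \<Rightarrow> (real \<times> 'u) measure"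
  where "xu_law \<mu> \<sigma> T K = distr (joint3 \<mu> \<sigma> T K) (borel \<Otimes>\<^sub>M borel_of T) (\<lambda>z. (fst z, fst (snd z)))"

definition yu_law :: "real \<Rightarrow> real \<Rightarrow> 'u topology \<Rightarrow> (real \<Rightarrow> ('u \<times> real) measure) \<Rightarrow> (real \<times> 'u) measure"
  where "yu_law \<mu> \<sigma> T K = distr (joint3 \<mu> \<sigma> T K) (borel \<Otimes>\<^sub>M borel_of T) (\<lambda>z. (snd (snd z), fst (snd z)))"

definition varphi_feasible :: "real \<Rightarrow> real \<Rightarrow> real \<Rightarrow> real topology \<Rightarrow> (real \<Rightarrow> (real \<times> real) measure) \<Rightarrow> bool"
  where "varphi_feasible \<mu> \<sigma> D T K \<longleftrightarrow> Polish_space T \<and>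
    K \<in> borel \<rightarrow>\<^sub>M prob_algebra (borel_of T \<Otimes>\<^sub>M borel) \<and>
    (\<integral>\<^sup>+z. ennreal ((fst z - snd (snd z))\<^sup>2) \<partial>joint3 \<mu> \<sigma> T K) \<le> ennreal D \<and>
    markov_chain borel (borel_of T) borel (joint3 \<mu> \<sigma> T K) \<and>
    distr (joint3 \<mu> \<sigma> T K) borel (\<lambda>z. snd (snd z)) = gaussian \<mu> \<sigma>"

definition varphi_cost :: "real \<Rightarrow> real \<Rightarrow> 'u topology \<Rightarrow> (real \<Rightarrow> ('u \<times> real) measure) \<Rightarrow> ennreal"
  where "varphi_cost \<mu> \<sigma> T K =
    max (mutual_info borel (borel_of T) (xu_law \<mu> \<sigma> T K)) (mutual_info borel (borel_of T) (yu_law \<mu> \<sigma> T K))"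

lemma le_varphiI:
  "(\<And>T K. varphi_feasible \<mu> \<sigma> D T K \<Longrightarrow> B \<le> varphi_cost \<mu> \<sigma> T K) \<Longrightarrow> B \<le> varphi \<mu> \<sigma> D"
  unfolding varphi_def varphi_feasible_def varphi_cost_def xu_law_def yu_law_def
  by (rule INF_greatest) auto

lemma varphi_le_cost: "varphi_feasible \<mu> \<sigma> D T K \<Longrightarrow> varphi \<mu> \<sigma> D \<le> varphi_cost \<mu> \<sigma> T K"
  unfolding varphi_def varphi_feasible_def varphi_cost_def xu_law_def yu_law_def
  by (rule INF_lower2[of "(T, K)"]) auto

lemma borel_of_euclidean: "borel_of (euclidean :: real topology) = borel"
  unfolding borel_of_def borel_def by simp

lemma Polish_space_euclidean_real: "Polish_space (euclidean :: real topology)"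
  unfolding Polish_space_def separable_space_def
  by (auto simp: completely_metrizable_space_euclidean countable_rat Rats_closure_real
      intro!: exI[of _ "\<rat>"])

lemma joint3_eq_kernel_joint:
  "joint3 \<mu> \<sigma> T K = gaussian \<mu> \<sigma> \<bind> (\<lambda>x. distr (K x) (borel \<Otimes>\<^sub>M (borel_of T \<Otimes>\<^sub>M borel)) (Pair x))"
proof -
  have "(\<lambda>(u, y). (x, u, y)) = Pair x" for x :: real by (auto simp: fun_eq_iff)
  then show ?thesis unfolding joint3_def by simp
qed

context
  fixes \<mu> \<sigma> :: real and T :: "'u topology" and K :: "real \<Rightarrow> ('u \<times> real) measure"
  assumes \<sigma>_pos: "\<sigma> > 0" and K [measurable]: "K \<in> borel \<rightarrow>\<^sub>M prob_algebra (borel_of T \<Otimes>\<^sub>M borel)"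
begin

lemma prob_space_joint3: "prob_space (joint3 \<mu> \<sigma> T K)"
  and sets_joint3 [measurable_cong]: "sets (joint3 \<mu> \<sigma> T K) = sets (borel \<Otimes>\<^sub>M (borel_of T \<Otimes>\<^sub>M borel))"
  and distr_fst_joint3: "distr (joint3 \<mu> \<sigma> T K) borel fst = gaussian \<mu> \<sigma>"
  unfolding joint3_eq_kernel_joint
  by (rule prob_space_kernel_joint sets_kernel_joint distr_fst_kernel_joint;
      simp add: prob_space_gaussian \<sigma>_pos)+

lemma prob_space_xu_law: "prob_space (xu_law \<mu> \<sigma> T K)"
  and sets_xu_law [measurable_cong]: "sets (xu_law \<mu> \<sigma> T K) = sets (borel \<Otimes>\<^sub>M borel_of T)"
  and distr_fst_xu_law: "distr (xu_law \<mu> \<sigma> T K) borel fst = gaussian \<mu> \<sigma>"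
proof -
  interpret prob_space "joint3 \<mu> \<sigma> T K" by (rule prob_space_joint3)
  show "prob_space (xu_law \<mu> \<sigma> T K)" unfolding xu_law_def by (rule prob_space_distr) simp
  show "sets (xu_law \<mu> \<sigma> T K) = sets (borel \<Otimes>\<^sub>M borel_of T)" unfolding xu_law_def by simp
  show "distr (xu_law \<mu> \<sigma> T K) borel fst = gaussian \<mu> \<sigma>"
    unfolding xu_law_def by (subst distr_distr) (auto simp: comp_def distr_fst_joint3[symmetric])
qed

lemma prob_space_yu_law: "prob_space (yu_law \<mu> \<sigma> T K)"
  and sets_yu_law [measurable_cong]: "sets (yu_law \<mu> \<sigma> T K) = sets (borel \<Otimes>\<^sub>M borel_of T)"
  and distr_fst_yu_law:
    "distr (joint3 \<mu> \<sigma> T K) borel (\<lambda>z. snd (snd z)) = gaussian \<mu> \<sigma> \<Longrightarrow>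
     distr (yu_law \<mu> \<sigma> T K) borel fst = gaussian \<mu> \<sigma>"
proof -
  interpret prob_space "joint3 \<mu> \<sigma> T K" by (rule prob_space_joint3)
  show "prob_space (yu_law \<mu> \<sigma> T K)" unfolding yu_law_def by (rule prob_space_distr) simp
  show "sets (yu_law \<mu> \<sigma> T K) = sets (borel \<Otimes>\<^sub>M borel_of T)" unfolding yu_law_def by simp
  assume "distr (joint3 \<mu> \<sigma> T K) borel (\<lambda>z. snd (snd z)) = gaussian \<mu> \<sigma>"
  then show "distr (yu_law \<mu> \<sigma> T K) borel fst = gaussian \<mu> \<sigma>"
    unfolding yu_law_def by (subst distr_distr) (auto simp: comp_def)
qed

end

lemma varphi_feasibleD:
  assumes "varphi_feasible \<mu> \<sigma> D T K"
  shows "K \<in> borel \<rightarrow>\<^sub>M prob_algebra (borel_of T \<Otimes>\<^sub>M borel)"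
    and "(\<integral>\<^sup>+z. ennreal ((fst z - snd (snd z))\<^sup>2) \<partial>joint3 \<mu> \<sigma> T K) \<le> ennreal D"
    and "markov_chain borel (borel_of T) borel (joint3 \<mu> \<sigma> T K)"
    and "distr (joint3 \<mu> \<sigma> T K) borel (\<lambda>z. snd (snd z)) = gaussian \<mu> \<sigma>"
  using assms unfolding varphi_feasible_def by auto

lemma nn_integral_square_dist_ge_variance:
  fixes Q :: "real measure"
  assumes "prob_space Q" and sets_Q: "sets Q = sets borel"
  shows "ennreal ((x - (\<integral>y. y \<partial>Q))\<^sup>2) + (\<integral>\<^sup>+y. ennreal ((y - (\<integral>y. y \<partial>Q))\<^sup>2) \<partial>Q)
         \<le> (\<integral>\<^sup>+y. ennreal ((x - y)\<^sup>2) \<partial>Q)"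
proof (cases "integrable Q (\<lambda>y. (x - y)\<^sup>2)")
  case False
  have "(\<integral>\<^sup>+y. ennreal ((x - y)\<^sup>2) \<partial>Q) = \<top>"
  proof (rule ccontr)
    assume "(\<integral>\<^sup>+y. ennreal ((x - y)\<^sup>2) \<partial>Q) \<noteq> \<top>"
    then have "integrable Q (\<lambda>y. (x - y)\<^sup>2)"
      by (intro integrableI_nonneg) (auto simp: sets_Q less_top cong: measurable_cong_sets)
    with False show False ..
  qed
  then show ?thesis by simp
next
  case True
  interpret Q: prob_space Q by fact
  define m where "m = (\<integral>y. y \<partial>Q)"
  have meas_Q: "borel_measurable Q = borel_measurable borel"
    by (rule measurable_cong_sets[OF sets_Q refl])
  have "integrable Q (\<lambda>y. x - y)"
    using True by (rule Q.square_integrable_imp_integrable[rotated]) (simp add: meas_Q)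
  from Bochner_Integration.integrable_diff[OF Q.integrable_const[of x] this]
  have int_id: "integrable Q (\<lambda>y. y)" by simp
  have centred: "(\<lambda>y. (y - m)\<^sup>2) = (\<lambda>y. (x - y)\<^sup>2 - 2 * (x - m) * (x - y) + (x - m)\<^sup>2)"
    by (auto simp: fun_eq_iff power2_eq_square algebra_simps)
  have int_var: "integrable Q (\<lambda>y. (y - m)\<^sup>2)"
    unfolding centred using True int_id by auto
  have split: "(\<lambda>y. (x - y)\<^sup>2) = (\<lambda>y. (x - m)\<^sup>2 - 2 * (x - m) * (y - m) + (y - m)\<^sup>2)"
    by (auto simp: fun_eq_iff power2_eq_square algebra_simps)
  have "(\<integral>y. y - m \<partial>Q) = 0"
    using int_id by (simp add: Q.prob_space m_def)
  then have "(\<integral>y. (x - y)\<^sup>2 \<partial>Q) = (x - m)\<^sup>2 + (\<integral>y. (y - m)\<^sup>2 \<partial>Q)"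
    unfolding split using int_id int_var by (simp add: Q.prob_space)
  then have "(\<integral>\<^sup>+y. ennreal ((x - y)\<^sup>2) \<partial>Q) = ennreal ((x - m)\<^sup>2) + (\<integral>\<^sup>+y. ennreal ((y - m)\<^sup>2) \<partial>Q)"
    using True int_var by (simp add: nn_integral_eq_integral integral_nonneg)
  then show ?thesis by (simp add: m_def)
qed

context
  fixes \<mu> \<sigma> D :: real and T :: "'u topology" and K :: "real \<Rightarrow> ('u \<times> real) measure"
  assumes \<sigma>_pos: "\<sigma> > 0" and "0 \<le> D"
    and K [measurable]: "K \<in> borel \<rightarrow>\<^sub>M prob_algebra (borel_of T \<Otimes>\<^sub>M borel)"
    and distortion: "(\<integral>\<^sup>+z. ennreal ((fst z - snd (snd z))\<^sup>2) \<partial>joint3 \<mu> \<sigma> T K) \<le> ennreal D"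
    and markov: "markov_chain borel (borel_of T) borel (joint3 \<mu> \<sigma> T K)"
    and law_snd: "distr (joint3 \<mu> \<sigma> T K) borel (\<lambda>z. snd (snd z)) = gaussian \<mu> \<sigma>"
begin

declare sets_joint3[OF \<sigma>_pos K, measurable_cong] sets_xu_law[OF \<sigma>_pos K, measurable_cong]
  sets_yu_law[OF \<sigma>_pos K, measurable_cong]

lemma nn_integral_joint3_markov:
  obtains q where "q \<in> borel_of T \<rightarrow>\<^sub>M prob_algebra borel"
    "\<And>F. F \<in> borel_measurable (borel \<Otimes>\<^sub>M (borel_of T \<Otimes>\<^sub>M borel)) \<Longrightarrow>
       (\<integral>\<^sup>+z. F z \<partial>joint3 \<mu> \<sigma> T K) = (\<integral>\<^sup>+p. \<integral>\<^sup>+y. F (fst p, snd p, y) \<partial>q (snd p) \<partial>xu_law \<mu> \<sigma> T K)"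
proof -
  let ?J = "joint3 \<mu> \<sigma> T K" and ?B = "borel_of T"
  from markov obtain q where q [measurable]: "q \<in> ?B \<rightarrow>\<^sub>M prob_algebra borel"
    and J_eq: "?J = distr ?J (borel \<Otimes>\<^sub>M ?B) (\<lambda>(x, u, y). (x, u)) \<bind>
                      (\<lambda>(x, u). distr (q u) (borel \<Otimes>\<^sub>M (?B \<Otimes>\<^sub>M borel)) (\<lambda>y. (x, u, y)))"
    unfolding markov_chain_def by blast
  define L where "L p = distr (q (snd p)) (borel \<Otimes>\<^sub>M (?B \<Otimes>\<^sub>M borel)) (\<lambda>y. (fst p, snd p, y))"
    for p :: "real \<times> 'u"
  have proj: "(\<lambda>(x, u, y). (x, u)) = (\<lambda>z. (fst z, fst (snd z)))"
    and kernel: "(\<lambda>(x, u). distr (q u) (borel \<Otimes>\<^sub>M (?B \<Otimes>\<^sub>M borel)) (\<lambda>y. (x, u, y))) = L"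
    by (auto simp: fun_eq_iff L_def)
  have J_bind: "?J = xu_law \<mu> \<sigma> T K \<bind> L"
    using J_eq unfolding proj kernel xu_law_def .
  have "L \<in> (borel \<Otimes>\<^sub>M ?B) \<rightarrow>\<^sub>M prob_algebra (borel \<Otimes>\<^sub>M (?B \<Otimes>\<^sub>M borel))"
    unfolding L_def by (rule measurable_distr_prob_space2[where M=borel]) measurable
  from measurable_prob_algebraD[OF this]
  have L: "L \<in> xu_law \<mu> \<sigma> T K \<rightarrow>\<^sub>M subprob_algebra (borel \<Otimes>\<^sub>M (?B \<Otimes>\<^sub>M borel))"
    unfolding measurable_cong_sets[OF sets_xu_law[OF \<sigma>_pos K] refl] .
  show ?thesis
  proof (rule that[OF q])
    fix F :: "real \<times> 'u \<times> real \<Rightarrow> ennreal"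
    assume [measurable]: "F \<in> borel_measurable (borel \<Otimes>\<^sub>M (?B \<Otimes>\<^sub>M borel))"
    have "(\<integral>\<^sup>+z. F z \<partial>?J) = (\<integral>\<^sup>+p. \<integral>\<^sup>+z. F z \<partial>L p \<partial>xu_law \<mu> \<sigma> T K)"
      unfolding J_bind by (rule nn_integral_bind[OF _ L]) simp
    also have "\<dots> = (\<integral>\<^sup>+p. \<integral>\<^sup>+y. F (fst p, snd p, y) \<partial>q (snd p) \<partial>xu_law \<mu> \<sigma> T K)"
    proof (intro nn_integral_cong)
      fix p assume "p \<in> space (xu_law \<mu> \<sigma> T K)"
      then have "snd p \<in> space ?B"
        unfolding sets_eq_imp_space_eq[OF sets_xu_law[OF \<sigma>_pos K]] by (auto simp: space_pair_measure)
      then have "sets (q (snd p)) = sets borel"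
        using measurable_space[OF q] by (simp add: space_prob_algebra)
      with \<open>snd p \<in> space ?B\<close> have "(\<lambda>y. (fst p, snd p, y)) \<in> q (snd p) \<rightarrow>\<^sub>M borel \<Otimes>\<^sub>M (?B \<Otimes>\<^sub>M borel)"
        by (simp cong: measurable_cong_sets)
      then show "(\<integral>\<^sup>+z. F z \<partial>L p) = (\<integral>\<^sup>+y. F (fst p, snd p, y) \<partial>q (snd p))"
        unfolding L_def by (subst nn_integral_distr) auto
    qed
    finally show "(\<integral>\<^sup>+z. F z \<partial>?J) = (\<integral>\<^sup>+p. \<integral>\<^sup>+y. F (fst p, snd p, y) \<partial>q (snd p) \<partial>xu_law \<mu> \<sigma> T K)" .
  qed
qed

text \<open>The conditional mean \<open>m(u) = E[Y | U = u]\<close> estimates both \<open>X\<close> and the reconstruction \<open>Y\<close>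
  from \<open>U\<close>; since \<open>Y\<close> is conditionally independent of \<open>X\<close> given \<open>U\<close>, the two squared errors
  add up to at most the distortion \<open>E (X - Y)\<^sup>2\<close>.\<close>

lemma common_estimator:
  obtains m where "m \<in> borel_measurable (borel_of T)"
    "(\<integral>\<^sup>+z. ennreal ((fst z - m (snd z))\<^sup>2) \<partial>xu_law \<mu> \<sigma> T K)
       + (\<integral>\<^sup>+z. ennreal ((fst z - m (snd z))\<^sup>2) \<partial>yu_law \<mu> \<sigma> T K) \<le> ennreal D"
proof -
  let ?J = "joint3 \<mu> \<sigma> T K" and ?B = "borel_of T" and ?XU = "xu_law \<mu> \<sigma> T K"
  obtain q where q [measurable]: "q \<in> ?B \<rightarrow>\<^sub>M prob_algebra borel"
    and markov_integral: "\<And>F. F \<in> borel_measurable (borel \<Otimes>\<^sub>M (?B \<Otimes>\<^sub>M borel)) \<Longrightarrow>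
       (\<integral>\<^sup>+z. F z \<partial>?J) = (\<integral>\<^sup>+p. \<integral>\<^sup>+y. F (fst p, snd p, y) \<partial>q (snd p) \<partial>?XU)"
    using nn_integral_joint3_markov by blast
  define m where "m u = (\<integral>y. y \<partial>q u)" for u
  have [measurable]: "m \<in> borel_measurable ?B"
    unfolding m_def by (rule measurable_compose[OF measurable_prob_algebraD[OF q]
        integral_measurable_subprob_algebra]) simp
  have "(\<lambda>p. \<integral>\<^sup>+y. ennreal ((y - m (snd p))\<^sup>2) \<partial>q (snd p)) \<in> borel_measurable (borel \<Otimes>\<^sub>M ?B)"
    by (rule nn_integral_measurable_subprob_algebra2[OF _ measurable_compose[OF measurable_snd
        measurable_prob_algebraD[OF q]]]) measurable
  then have [measurable]: "(\<lambda>p. \<integral>\<^sup>+y. ennreal ((y - m (snd p))\<^sup>2) \<partial>q (snd p)) \<in> borel_measurable ?XU"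
    by (simp add: measurable_cong_sets[OF sets_xu_law[OF \<sigma>_pos K] refl])
  have "(\<integral>\<^sup>+z. ennreal ((fst z - m (snd z))\<^sup>2) \<partial>yu_law \<mu> \<sigma> T K) =
        (\<integral>\<^sup>+z. ennreal ((snd (snd z) - m (fst (snd z)))\<^sup>2) \<partial>?J)"
    unfolding yu_law_def by (subst nn_integral_distr) auto
  also have "\<dots> = (\<integral>\<^sup>+p. \<integral>\<^sup>+y. ennreal ((y - m (snd p))\<^sup>2) \<partial>q (snd p) \<partial>?XU)"
    by (subst markov_integral) auto
  finally have yu_error: "(\<integral>\<^sup>+z. ennreal ((fst z - m (snd z))\<^sup>2) \<partial>yu_law \<mu> \<sigma> T K) =
      (\<integral>\<^sup>+p. \<integral>\<^sup>+y. ennreal ((y - m (snd p))\<^sup>2) \<partial>q (snd p) \<partial>?XU)" .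
  have "(\<integral>\<^sup>+z. ennreal ((fst z - m (snd z))\<^sup>2) \<partial>?XU)
      + (\<integral>\<^sup>+z. ennreal ((fst z - m (snd z))\<^sup>2) \<partial>yu_law \<mu> \<sigma> T K) =
      (\<integral>\<^sup>+p. ennreal ((fst p - m (snd p))\<^sup>2) + \<integral>\<^sup>+y. ennreal ((y - m (snd p))\<^sup>2) \<partial>q (snd p) \<partial>?XU)"
    unfolding yu_error by (rule nn_integral_add[symmetric]) measurable
  also have "\<dots> \<le> (\<integral>\<^sup>+p. \<integral>\<^sup>+y. ennreal ((fst p - y)\<^sup>2) \<partial>q (snd p) \<partial>?XU)"
  proof (intro nn_integral_mono)
    fix p assume "p \<in> space ?XU"
    then have "snd p \<in> space ?B"
      unfolding sets_eq_imp_space_eq[OF sets_xu_law[OF \<sigma>_pos K]] by (auto simp: space_pair_measure)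
    then have "prob_space (q (snd p))" "sets (q (snd p)) = sets borel"
      using measurable_space[OF q] by (simp_all add: space_prob_algebra)
    then show "ennreal ((fst p - m (snd p))\<^sup>2) + (\<integral>\<^sup>+y. ennreal ((y - m (snd p))\<^sup>2) \<partial>q (snd p))
               \<le> (\<integral>\<^sup>+y. ennreal ((fst p - y)\<^sup>2) \<partial>q (snd p))"
      unfolding m_def by (rule nn_integral_square_dist_ge_variance)
  qed
  also have "\<dots> = (\<integral>\<^sup>+z. ennreal ((fst z - snd (snd z))\<^sup>2) \<partial>?J)"
    by (subst markov_integral) auto
  also have "\<dots> \<le> ennreal D" by (rule distortion)
  finally show ?thesis by (rule that[rotated]) simp
qed

lemma common_estimator_integral:
  obtains m where "m \<in> borel_measurable (borel_of T)"
    "integrable (xu_law \<mu> \<sigma> T K) (\<lambda>z. (fst z - m (snd z))\<^sup>2)"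
    "integrable (yu_law \<mu> \<sigma> T K) (\<lambda>z. (fst z - m (snd z))\<^sup>2)"
    "(\<integral>z. (fst z - m (snd z))\<^sup>2 \<partial>xu_law \<mu> \<sigma> T K) + (\<integral>z. (fst z - m (snd z))\<^sup>2 \<partial>yu_law \<mu> \<sigma> T K) \<le> D"
proof -
  obtain m where m [measurable]: "m \<in> borel_measurable (borel_of T)"
    and sum: "(\<integral>\<^sup>+z. ennreal ((fst z - m (snd z))\<^sup>2) \<partial>xu_law \<mu> \<sigma> T K)
       + (\<integral>\<^sup>+z. ennreal ((fst z - m (snd z))\<^sup>2) \<partial>yu_law \<mu> \<sigma> T K) \<le> ennreal D"
    by (rule common_estimator)
  have le_XU: "(\<integral>\<^sup>+z. ennreal ((fst z - m (snd z))\<^sup>2) \<partial>xu_law \<mu> \<sigma> T K) \<le> ennreal D"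
    and le_YU: "(\<integral>\<^sup>+z. ennreal ((fst z - m (snd z))\<^sup>2) \<partial>yu_law \<mu> \<sigma> T K) \<le> ennreal D"
    using sum by (auto intro: order_trans[OF _ sum])
  have int: "integrable (xu_law \<mu> \<sigma> T K) (\<lambda>z. (fst z - m (snd z))\<^sup>2)"
            "integrable (yu_law \<mu> \<sigma> T K) (\<lambda>z. (fst z - m (snd z))\<^sup>2)"
    by (rule nn_integral_le_ennreal_imp_integral(1)[OF _ _ le_XU \<open>0 \<le> D\<close>], simp, simp)
       (rule nn_integral_le_ennreal_imp_integral(1)[OF _ _ le_YU \<open>0 \<le> D\<close>], simp, simp)
  then have "ennreal ((\<integral>z. (fst z - m (snd z))\<^sup>2 \<partial>xu_law \<mu> \<sigma> T K)
                    + (\<integral>z. (fst z - m (snd z))\<^sup>2 \<partial>yu_law \<mu> \<sigma> T K)) \<le> ennreal D"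
    using sum by (simp add: nn_integral_eq_integral ennreal_plus integral_nonneg)
  then have "(\<integral>z. (fst z - m (snd z))\<^sup>2 \<partial>xu_law \<mu> \<sigma> T K) + (\<integral>z. (fst z - m (snd z))\<^sup>2 \<partial>yu_law \<mu> \<sigma> T K) \<le> D"
    using \<open>0 \<le> D\<close> by (simp add: ennreal_le_iff del: ennreal_plus)
  from that[OF m int this] show ?thesis .
qed

lemma varphi_cost_ge:
  assumes "0 < D"
  shows "ennreal (1/2 * log 2 (2 * \<sigma>\<^sup>2 / D)) \<le> varphi_cost \<mu> \<sigma> T K"
proof -
  obtain m where m: "m \<in> borel_measurable (borel_of T)"
    and int_XU: "integrable (xu_law \<mu> \<sigma> T K) (\<lambda>z. (fst z - m (snd z))\<^sup>2)"
    and int_YU: "integrable (yu_law \<mu> \<sigma> T K) (\<lambda>z. (fst z - m (snd z))\<^sup>2)"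
    and sum: "(\<integral>z. (fst z - m (snd z))\<^sup>2 \<partial>xu_law \<mu> \<sigma> T K)
              + (\<integral>z. (fst z - m (snd z))\<^sup>2 \<partial>yu_law \<mu> \<sigma> T K) \<le> D"
    by (rule common_estimator_integral)
  consider "(\<integral>z. (fst z - m (snd z))\<^sup>2 \<partial>xu_law \<mu> \<sigma> T K) \<le> D / 2"
    | "(\<integral>z. (fst z - m (snd z))\<^sup>2 \<partial>yu_law \<mu> \<sigma> T K) \<le> D / 2"
    using sum by linarith
  then have bound: "ennreal (1/2 * log 2 (\<sigma>\<^sup>2 / (D / 2))) \<le> varphi_cost \<mu> \<sigma> T K"
  proof cases
    case 1
    have "ennreal (1/2 * log 2 (\<sigma>\<^sup>2 / (D / 2))) \<le> mutual_info borel (borel_of T) (xu_law \<mu> \<sigma> T K)"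
      by (rule mutual_info_ge_half_log_variance_ratio[OF \<sigma>_pos prob_space_xu_law[OF \<sigma>_pos K]
          sets_xu_law[OF \<sigma>_pos K] distr_fst_xu_law[OF \<sigma>_pos K] m int_XU 1]) (use \<open>0 < D\<close> in simp)
    then show ?thesis unfolding varphi_cost_def by (rule order_trans) simp
  next
    case 2
    have "ennreal (1/2 * log 2 (\<sigma>\<^sup>2 / (D / 2))) \<le> mutual_info borel (borel_of T) (yu_law \<mu> \<sigma> T K)"
      by (rule mutual_info_ge_half_log_variance_ratio[OF \<sigma>_pos prob_space_yu_law[OF \<sigma>_pos K]
          sets_yu_law[OF \<sigma>_pos K] distr_fst_yu_law[OF \<sigma>_pos K law_snd] m int_YU 2])
         (use \<open>0 < D\<close> in simp)
    then show ?thesis unfolding varphi_cost_def by (rule order_trans) simp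
  qed
  have "\<sigma>\<^sup>2 / (D / 2) = 2 * \<sigma>\<^sup>2 / D" by simp
  then show ?thesis using bound by metis
qed

lemma varphi_cost_eq_top:
  assumes "D = 0"
  shows "varphi_cost \<mu> \<sigma> T K = \<top>"
proof -
  obtain m where m: "m \<in> borel_measurable (borel_of T)"
    and int_XU: "integrable (xu_law \<mu> \<sigma> T K) (\<lambda>z. (fst z - m (snd z))\<^sup>2)"
    and sum: "(\<integral>z. (fst z - m (snd z))\<^sup>2 \<partial>xu_law \<mu> \<sigma> T K)
              + (\<integral>z. (fst z - m (snd z))\<^sup>2 \<partial>yu_law \<mu> \<sigma> T K) \<le> D"
    by (rule common_estimator_integral)
  have "0 \<le> (\<integral>z. (fst z - m (snd z))\<^sup>2 \<partial>yu_law \<mu> \<sigma> T K)" by (simp add: integral_nonneg)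
  with sum assms have "(\<integral>z. (fst z - m (snd z))\<^sup>2 \<partial>xu_law \<mu> \<sigma> T K) \<le> 0" by linarith
  then have "mutual_info borel (borel_of T) (xu_law \<mu> \<sigma> T K) = \<top>"
    by (rule mutual_info_eq_top_if_exact_estimation[OF \<sigma>_pos prob_space_xu_law[OF \<sigma>_pos K]
        sets_xu_law[OF \<sigma>_pos K] distr_fst_xu_law[OF \<sigma>_pos K] m int_XU])
  then show ?thesis by (simp add: varphi_cost_def)
qed

end

text \<open>The test channel for \<open>varphi\<close>: \<open>U\<close> is \<open>X\<close> passed through \<open>gauss_channel\<close> and \<open>Y\<close> is \<open>U\<close>
  passed through it once more, so that \<open>(X, U)\<close> and \<open>(Y, U)\<close> are both \<open>gauss_pair \<mu> \<sigma> r\<close>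
  while \<open>X\<close> and \<open>Y\<close> have correlation \<open>r\<^sup>2\<close>.\<close>

definition gauss_chain_kernel :: "real \<Rightarrow> real \<Rightarrow> real \<Rightarrow> real \<Rightarrow> (real \<times> real) measure" where
  "gauss_chain_kernel \<mu> \<sigma> r x =
     gauss_channel \<mu> \<sigma> r x \<bind> (\<lambda>u. distr (gauss_channel \<mu> \<sigma> r u) (borel \<Otimes>\<^sub>M borel) (Pair u))"

abbreviation gauss_chain :: "real \<Rightarrow> real \<Rightarrow> real \<Rightarrow> (real \<times> real \<times> real) measure" where
  "gauss_chain \<mu> \<sigma> r \<equiv> joint3 \<mu> \<sigma> euclidean (gauss_chain_kernel \<mu> \<sigma> r)"

context
  fixes \<mu> \<sigma> r :: real
  assumes \<sigma>_pos: "\<sigma> > 0" and r: "\<bar>r\<bar> < 1"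
begin

lemma measurable_gauss_chain_kernel:
  "gauss_chain_kernel \<mu> \<sigma> r \<in> borel \<rightarrow>\<^sub>M prob_algebra (borel_of euclidean \<Otimes>\<^sub>M borel)"
  unfolding gauss_chain_kernel_def borel_of_euclidean
  by (rule measurable_bind_prob_space[OF measurable_gauss_channel[OF \<sigma>_pos r]
        measurable_kernel_Pair[OF measurable_gauss_channel[OF \<sigma>_pos r]]])

lemma sets_gauss_chain [measurable_cong]:
  "sets (gauss_chain \<mu> \<sigma> r) = sets (borel \<Otimes>\<^sub>M (borel \<Otimes>\<^sub>M borel))"
  using sets_joint3[OF \<sigma>_pos measurable_gauss_chain_kernel] by (simp add: borel_of_euclidean)

lemma nn_integral_gauss_chain:
  assumes [measurable]: "F \<in> borel_measurable (borel \<Otimes>\<^sub>M (borel \<Otimes>\<^sub>M borel))"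
  shows "(\<integral>\<^sup>+z. F z \<partial>gauss_chain \<mu> \<sigma> r) =
    (\<integral>\<^sup>+x. \<integral>\<^sup>+u. \<integral>\<^sup>+y. F (x, u, y) \<partial>gauss_channel \<mu> \<sigma> r u \<partial>gauss_channel \<mu> \<sigma> r x \<partial>gaussian \<mu> \<sigma>)"
proof -
  have "(\<integral>\<^sup>+w. F (x, w) \<partial>gauss_chain_kernel \<mu> \<sigma> r x) =
        (\<integral>\<^sup>+u. \<integral>\<^sup>+y. F (x, u, y) \<partial>gauss_channel \<mu> \<sigma> r u \<partial>gauss_channel \<mu> \<sigma> r x)" for x
    unfolding gauss_chain_kernel_def
    by (rule nn_integral_kernel_joint[OF prob_space_gauss_channel[OF \<sigma>_pos r] _
          measurable_gauss_channel[OF \<sigma>_pos r]]) simp_all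
  then show ?thesis
    unfolding joint3_eq_kernel_joint borel_of_euclidean
    using measurable_gauss_chain_kernel
    by (subst nn_integral_kernel_joint[OF prob_space_gaussian[OF \<sigma>_pos]]) (simp_all add: borel_of_euclidean)
qed

lemma emeasure_distr_gauss_chain:
  assumes [measurable]: "f \<in> (borel \<Otimes>\<^sub>M (borel \<Otimes>\<^sub>M borel)) \<rightarrow>\<^sub>M N" "A \<in> sets N"
  shows "emeasure (distr (gauss_chain \<mu> \<sigma> r) N f) A = (\<integral>\<^sup>+x. \<integral>\<^sup>+u. \<integral>\<^sup>+y. indicator A (f (x, u, y))
           \<partial>gauss_channel \<mu> \<sigma> r u \<partial>gauss_channel \<mu> \<sigma> r x \<partial>gaussian \<mu> \<sigma>)"
proof -
  have "emeasure (distr (gauss_chain \<mu> \<sigma> r) N f) A = (\<integral>\<^sup>+z. indicator A z \<partial>distr (gauss_chain \<mu> \<sigma> r) N f)"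
    by simp
  also have "\<dots> = (\<integral>\<^sup>+z. indicator A (f z) \<partial>gauss_chain \<mu> \<sigma> r)"
    by (rule nn_integral_distr) simp_all
  also have "\<dots> = (\<integral>\<^sup>+x. \<integral>\<^sup>+u. \<integral>\<^sup>+y. indicator A (f (x, u, y))
                    \<partial>gauss_channel \<mu> \<sigma> r u \<partial>gauss_channel \<mu> \<sigma> r x \<partial>gaussian \<mu> \<sigma>)"
    by (rule nn_integral_gauss_chain) simp
  finally show ?thesis .
qed

lemma emeasure_gauss_pair:
  assumes [measurable]: "A \<in> sets (borel \<Otimes>\<^sub>M borel)"
  shows "emeasure (gauss_pair \<mu> \<sigma> r) A =
         (\<integral>\<^sup>+x. \<integral>\<^sup>+u. indicator A (x, u) \<partial>gauss_channel \<mu> \<sigma> r x \<partial>gaussian \<mu> \<sigma>)"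
  using nn_integral_gauss_pair[OF \<sigma>_pos r, of "indicator A"]
  by (simp add: sets_gauss_pair[OF \<sigma>_pos r])

lemma distr_xu_gauss_chain: "xu_law \<mu> \<sigma> euclidean (gauss_chain_kernel \<mu> \<sigma> r) = gauss_pair \<mu> \<sigma> r"
proof (rule measure_eqI)
  fix A assume "A \<in> sets (xu_law \<mu> \<sigma> euclidean (gauss_chain_kernel \<mu> \<sigma> r))"
  then have [measurable]: "A \<in> sets (borel \<Otimes>\<^sub>M borel)" by (simp add: xu_law_def borel_of_euclidean)
  show "emeasure (xu_law \<mu> \<sigma> euclidean (gauss_chain_kernel \<mu> \<sigma> r)) A = emeasure (gauss_pair \<mu> \<sigma> r) A"
    unfolding xu_law_def borel_of_euclidean emeasure_gauss_pair[OF \<open>A \<in> sets (borel \<Otimes>\<^sub>M borel)\<close>]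
    by (subst emeasure_distr_gauss_chain)
       (simp_all add: prob_space.emeasure_space_1[OF prob_space_gauss_channel[OF \<sigma>_pos r], simplified])
qed (simp add: xu_law_def borel_of_euclidean sets_gauss_pair[OF \<sigma>_pos r])

lemma distr_yu_gauss_chain: "yu_law \<mu> \<sigma> euclidean (gauss_chain_kernel \<mu> \<sigma> r) = gauss_pair \<mu> \<sigma> r"
proof (rule measure_eqI)
  fix A assume "A \<in> sets (yu_law \<mu> \<sigma> euclidean (gauss_chain_kernel \<mu> \<sigma> r))"
  then have [measurable]: "A \<in> sets (borel \<Otimes>\<^sub>M borel)" by (simp add: yu_law_def borel_of_euclidean)
  have "emeasure (yu_law \<mu> \<sigma> euclidean (gauss_chain_kernel \<mu> \<sigma> r)) A =
     (\<integral>\<^sup>+x. \<integral>\<^sup>+u. \<integral>\<^sup>+y. indicator A (y, u) \<partial>gauss_channel \<mu> \<sigma> r u \<partial>gauss_channel \<mu> \<sigma> r x \<partial>gaussian \<mu> \<sigma>)"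
    unfolding yu_law_def borel_of_euclidean by (subst emeasure_distr_gauss_chain) simp_all
  also have "\<dots> = (\<integral>\<^sup>+u. \<integral>\<^sup>+y. indicator A (y, u) \<partial>gauss_channel \<mu> \<sigma> r u \<partial>gaussian \<mu> \<sigma>)"
    by (rule gauss_channel_stationary[OF \<sigma>_pos r], rule nn_integral_measurable_subprob_algebra2
        [OF _ measurable_prob_algebraD[OF measurable_gauss_channel[OF \<sigma>_pos r]]]) measurable
  also have "\<dots> = (\<integral>\<^sup>+z. indicator A (snd z, fst z) \<partial>gauss_pair \<mu> \<sigma> r)"
    by (subst nn_integral_gauss_pair[OF \<sigma>_pos r]) auto
  also have "\<dots> = emeasure (gauss_pair \<mu> \<sigma> r) A"
    by (subst nn_integral_gauss_pair_swap[OF \<sigma>_pos r]) (auto simp: sets_gauss_pair[OF \<sigma>_pos r])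
  finally show "emeasure (yu_law \<mu> \<sigma> euclidean (gauss_chain_kernel \<mu> \<sigma> r)) A = emeasure (gauss_pair \<mu> \<sigma> r) A" .
qed (simp add: yu_law_def borel_of_euclidean sets_gauss_pair[OF \<sigma>_pos r])

lemma distr_snd_snd_gauss_chain: "distr (gauss_chain \<mu> \<sigma> r) borel (\<lambda>z. snd (snd z)) = gaussian \<mu> \<sigma>"
proof (rule measure_eqI)
  fix A assume "A \<in> sets (distr (gauss_chain \<mu> \<sigma> r) borel (\<lambda>z. snd (snd z)))"
  then have [measurable]: "A \<in> sets borel" by simp
  have "emeasure (distr (gauss_chain \<mu> \<sigma> r) borel (\<lambda>z. snd (snd z))) A =
     (\<integral>\<^sup>+x. \<integral>\<^sup>+u. \<integral>\<^sup>+y. indicator A y \<partial>gauss_channel \<mu> \<sigma> r u \<partial>gauss_channel \<mu> \<sigma> r x \<partial>gaussian \<mu> \<sigma>)"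
    by (subst emeasure_distr_gauss_chain) simp_all
  also have "\<dots> = (\<integral>\<^sup>+u. \<integral>\<^sup>+y. indicator A y \<partial>gauss_channel \<mu> \<sigma> r u \<partial>gaussian \<mu> \<sigma>)"
    by (rule gauss_channel_stationary[OF \<sigma>_pos r], rule nn_integral_measurable_subprob_algebra2
        [OF _ measurable_prob_algebraD[OF measurable_gauss_channel[OF \<sigma>_pos r]]]) measurable
  also have "\<dots> = emeasure (gaussian \<mu> \<sigma>) A"
    by (subst gauss_channel_stationary[OF \<sigma>_pos r]) simp_all
  finally show "emeasure (distr (gauss_chain \<mu> \<sigma> r) borel (\<lambda>z. snd (snd z))) A = emeasure (gaussian \<mu> \<sigma>) A" .
qed simp

lemma gauss_chain_square_distortion:
  "(\<integral>\<^sup>+z. ennreal ((fst z - snd (snd z))\<^sup>2) \<partial>gauss_chain \<mu> \<sigma> r) = ennreal (2 * \<sigma>\<^sup>2 * (1 - r\<^sup>2))"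
proof -
  define c where "c = \<sigma>\<^sup>2 * (1 - r\<^sup>2)"
  have "c \<ge> 0" using one_minus_square_pos[OF \<sigma>_pos r] by (simp add: c_def)
  note channel_prob = prob_space.emeasure_space_1[OF prob_space_gauss_channel[OF \<sigma>_pos r]]
  have "(\<integral>\<^sup>+z. ennreal ((fst z - snd (snd z))\<^sup>2) \<partial>gauss_chain \<mu> \<sigma> r) =
     (\<integral>\<^sup>+x. \<integral>\<^sup>+u. \<integral>\<^sup>+y. ennreal ((x + (-1) * y)\<^sup>2)
        \<partial>gauss_channel \<mu> \<sigma> r u \<partial>gauss_channel \<mu> \<sigma> r x \<partial>gaussian \<mu> \<sigma>)"
    by (subst nn_integral_gauss_chain) auto
  also have "\<dots> = (\<integral>\<^sup>+x. \<integral>\<^sup>+u. ennreal (((x - \<mu> + r * \<mu>) + (- r) * u)\<^sup>2 + c)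
                      \<partial>gauss_channel \<mu> \<sigma> r x \<partial>gaussian \<mu> \<sigma>)"
    unfolding nn_integral_gauss_channel_affine_square[OF \<sigma>_pos r] c_def
    by (intro nn_integral_cong) (simp add: algebra_simps power2_eq_square)
  also have "\<dots> = (\<integral>\<^sup>+x. \<integral>\<^sup>+u. ennreal (((x - \<mu> + r * \<mu>) + (- r) * u)\<^sup>2) + ennreal c
                      \<partial>gauss_channel \<mu> \<sigma> r x \<partial>gaussian \<mu> \<sigma>)"
    using \<open>c \<ge> 0\<close> by (intro nn_integral_cong ennreal_plus) auto
  also have "\<dots> = (\<integral>\<^sup>+x. ennreal ((- (1 - r\<^sup>2) * \<mu> + (1 - r\<^sup>2) * x)\<^sup>2) + ennreal (r\<^sup>2 * c + c) \<partial>gaussian \<mu> \<sigma>)"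
  proof (intro nn_integral_cong)
    fix x
    have "(\<integral>\<^sup>+u. ennreal (((x - \<mu> + r * \<mu>) + (- r) * u)\<^sup>2) + ennreal c \<partial>gauss_channel \<mu> \<sigma> r x) =
        (\<integral>\<^sup>+u. ennreal (((x - \<mu> + r * \<mu>) + (- r) * u)\<^sup>2) \<partial>gauss_channel \<mu> \<sigma> r x) + ennreal c"
      using channel_prob by (subst nn_integral_add) auto
    also have "\<dots> = ennreal (((x - \<mu> + r * \<mu>) + (- r) * (\<mu> + r * (x - \<mu>)))\<^sup>2 + (- r)\<^sup>2 * c) + ennreal c"
      unfolding nn_integral_gauss_channel_affine_square[OF \<sigma>_pos r] c_def by (simp add: mult.assoc)
    also have "((x - \<mu> + r * \<mu>) + (- r) * (\<mu> + r * (x - \<mu>)))\<^sup>2 = (- (1 - r\<^sup>2) * \<mu> + (1 - r\<^sup>2) * x)\<^sup>2"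
      by (simp add: algebra_simps power2_eq_square)
    finally show "(\<integral>\<^sup>+u. ennreal (((x - \<mu> + r * \<mu>) + (- r) * u)\<^sup>2) + ennreal c \<partial>gauss_channel \<mu> \<sigma> r x) =
       ennreal ((- (1 - r\<^sup>2) * \<mu> + (1 - r\<^sup>2) * x)\<^sup>2) + ennreal (r\<^sup>2 * c + c)"
      using \<open>c \<ge> 0\<close> by (simp add: add.assoc)
  qed
  also have "\<dots> = (\<integral>\<^sup>+x. ennreal ((- (1 - r\<^sup>2) * \<mu> + (1 - r\<^sup>2) * x)\<^sup>2) \<partial>gaussian \<mu> \<sigma>)
                    + ennreal (r\<^sup>2 * c + c)"
    using emeasure_gaussian_UNIV[OF \<sigma>_pos] by (subst nn_integral_add) auto
  also have "\<dots> = ennreal ((1 - r\<^sup>2)\<^sup>2 * \<sigma>\<^sup>2) + ennreal (r\<^sup>2 * c + c)"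
    by (subst nn_integral_gaussian_affine_square[OF \<sigma>_pos]) (simp add: power2_eq_square algebra_simps)
  also have "\<dots> = ennreal ((1 - r\<^sup>2)\<^sup>2 * \<sigma>\<^sup>2 + (r\<^sup>2 * c + c))"
    using \<open>c \<ge> 0\<close> by (intro ennreal_plus[symmetric]) auto
  also have "(1 - r\<^sup>2)\<^sup>2 * \<sigma>\<^sup>2 + (r\<^sup>2 * c + c) = 2 * \<sigma>\<^sup>2 * (1 - r\<^sup>2)"
    by (simp add: c_def algebra_simps power2_eq_square)
  finally show ?thesis .
qed

lemma markov_chain_gauss_chain: "markov_chain borel (borel_of euclidean) borel (gauss_chain \<mu> \<sigma> r)"
proof -
  define L where "L p = distr (gauss_channel \<mu> \<sigma> r (snd p)) (borel \<Otimes>\<^sub>M (borel \<Otimes>\<^sub>M borel))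
                             (\<lambda>y. (fst p, snd p, y))" for p :: "real \<times> real"
  have L: "L \<in> (borel \<Otimes>\<^sub>M borel) \<rightarrow>\<^sub>M prob_algebra (borel \<Otimes>\<^sub>M (borel \<Otimes>\<^sub>M borel))"
    unfolding L_def by (rule measurable_distr_prob_space2[where M=borel])
      (rule measurable_compose[OF measurable_snd measurable_gauss_channel[OF \<sigma>_pos r]], measurable)
  have pair: "gauss_pair \<mu> \<sigma> r \<in> space (prob_algebra (borel \<Otimes>\<^sub>M borel))"
    by (simp add: space_prob_algebra prob_space_gauss_pair[OF \<sigma>_pos r] sets_gauss_pair[OF \<sigma>_pos r])
  have "gauss_chain \<mu> \<sigma> r = gauss_pair \<mu> \<sigma> r \<bind> L"
  proof (rule measure_eqI)
    fix A assume "A \<in> sets (gauss_chain \<mu> \<sigma> r)"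
    then have A [measurable]: "A \<in> sets (borel \<Otimes>\<^sub>M (borel \<Otimes>\<^sub>M borel))" by (simp add: sets_gauss_chain)
    have meas: "(\<lambda>p. \<integral>\<^sup>+y. indicator A (fst p, snd p, y) \<partial>gauss_channel \<mu> \<sigma> r (snd p))
            \<in> borel_measurable (borel \<Otimes>\<^sub>M borel)"
      by (rule nn_integral_measurable_subprob_algebra2[OF _ measurable_compose[OF measurable_snd
            measurable_prob_algebraD[OF measurable_gauss_channel[OF \<sigma>_pos r]]]]) measurable
    have "emeasure (gauss_pair \<mu> \<sigma> r \<bind> L) A =
          (\<integral>\<^sup>+p. \<integral>\<^sup>+y. indicator A (fst p, snd p, y) \<partial>gauss_channel \<mu> \<sigma> r (snd p) \<partial>gauss_pair \<mu> \<sigma> r)"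
      unfolding emeasure_bind_prob_algebra[OF pair L A]
    proof (intro nn_integral_cong)
      fix p :: "real \<times> real"
      have "emeasure (L p) A = (\<integral>\<^sup>+z. indicator A z \<partial>L p)"
        by (simp add: L_def)
      also have "\<dots> = (\<integral>\<^sup>+y. indicator A (fst p, snd p, y) \<partial>gauss_channel \<mu> \<sigma> r (snd p))"
        unfolding L_def by (rule nn_integral_distr) simp_all
      finally show "emeasure (L p) A = \<dots>" .
    qed
    also have "\<dots> = emeasure (gauss_chain \<mu> \<sigma> r) A"
      by (simp add: nn_integral_gauss_pair[OF \<sigma>_pos r meas] nn_integral_gauss_chain[symmetric])
    finally show "emeasure (gauss_chain \<mu> \<sigma> r) A = emeasure (gauss_pair \<mu> \<sigma> r \<bind> L) A" ..
  qed (simp add: sets_bind'[OF pair L] sets_gauss_chain)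
  moreover have "distr (gauss_chain \<mu> \<sigma> r) (borel \<Otimes>\<^sub>M borel) (\<lambda>(x, u, y). (x, u)) = gauss_pair \<mu> \<sigma> r"
    using distr_xu_gauss_chain unfolding xu_law_def borel_of_euclidean case_prod_unfold by simp
  moreover have "(\<lambda>(x, u). distr (gauss_channel \<mu> \<sigma> r u) (borel \<Otimes>\<^sub>M (borel \<Otimes>\<^sub>M borel)) (\<lambda>y. (x, u, y))) = L"
    by (auto simp: fun_eq_iff L_def)
  ultimately show ?thesis
    unfolding markov_chain_def borel_of_euclidean using measurable_gauss_channel[OF \<sigma>_pos r] by auto
qed

lemma varphi_le_mutual_info_gauss_pair:
  assumes "2 * \<sigma>\<^sup>2 * (1 - r\<^sup>2) \<le> D"
  shows "varphi \<mu> \<sigma> D \<le> ennreal (1/2 * log 2 (1 / (1 - r\<^sup>2)))"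
proof -
  have "varphi_feasible \<mu> \<sigma> D euclidean (gauss_chain_kernel \<mu> \<sigma> r)"
    unfolding varphi_feasible_def
    using Polish_space_euclidean_real measurable_gauss_chain_kernel gauss_chain_square_distortion
      markov_chain_gauss_chain distr_snd_snd_gauss_chain assms
    by (auto intro: ennreal_leI)
  then show ?thesis
    using varphi_le_cost[of \<mu> \<sigma> D] mutual_info_gauss_pair[OF \<sigma>_pos r]
    by (force simp: varphi_cost_def distr_xu_gauss_chain distr_yu_gauss_chain borel_of_euclidean)
qed

end

context
  fixes \<mu> \<sigma> :: real
  assumes \<sigma>_pos: "\<sigma> > 0"
begin

lemma varphi_at_zero: "varphi \<mu> \<sigma> 0 = \<infinity>"
proof -
  have "\<top> \<le> varphi \<mu> \<sigma> 0"
  proof (rule le_varphiI)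
    fix T K assume "varphi_feasible \<mu> \<sigma> 0 T K"
    from varphi_cost_eq_top[OF \<sigma>_pos order.refl varphi_feasibleD[OF this]]
    show "\<top> \<le> varphi_cost \<mu> \<sigma> T K" by simp
  qed
  then show ?thesis by (simp add: top_unique)
qed

lemma varphi_eq:
  assumes "0 < D" "D < 2 * \<sigma>\<^sup>2"
  shows "varphi \<mu> \<sigma> D = ennreal (1/2 * log 2 (2 * \<sigma>\<^sup>2 / D))"
proof (rule antisym)
  define r where "r = sqrt (1 - D / (2 * \<sigma>\<^sup>2))"
  have "0 \<le> 1 - D / (2 * \<sigma>\<^sup>2)" "1 - D / (2 * \<sigma>\<^sup>2) < 1"
    using assms \<sigma>_pos by (auto simp: field_simps)
  then have "\<bar>r\<bar> < 1" and r_sq: "r\<^sup>2 = 1 - D / (2 * \<sigma>\<^sup>2)" by (auto simp: r_def)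
  moreover have "2 * \<sigma>\<^sup>2 * (1 - r\<^sup>2) = D" using \<sigma>_pos by (simp add: r_sq)
  moreover have "1 / (1 - r\<^sup>2) = 2 * \<sigma>\<^sup>2 / D" using \<sigma>_pos assms by (simp add: r_sq)
  ultimately show "varphi \<mu> \<sigma> D \<le> ennreal (1/2 * log 2 (2 * \<sigma>\<^sup>2 / D))"
    using varphi_le_mutual_info_gauss_pair[OF \<sigma>_pos, of r D] by simp
  show "ennreal (1/2 * log 2 (2 * \<sigma>\<^sup>2 / D)) \<le> varphi \<mu> \<sigma> D"
  proof (rule le_varphiI)
    fix T K assume "varphi_feasible \<mu> \<sigma> D T K"
    with assms show "ennreal (1/2 * log 2 (2 * \<sigma>\<^sup>2 / D)) \<le> varphi_cost \<mu> \<sigma> T K"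
      by (intro varphi_cost_ge[OF \<sigma>_pos _ varphi_feasibleD]) auto
  qed
qed

lemma varphi_eq_0_if_ge:
  assumes "2 * \<sigma>\<^sup>2 \<le> D"
  shows "varphi \<mu> \<sigma> D = 0"
  using varphi_le_mutual_info_gauss_pair[OF \<sigma>_pos, of 0 D] assms by simp

end

theorem theorem8:
  fixes \<mu> \<sigma> :: real
  assumes "\<sigma> > 0"
  shows "(phi \<mu> \<sigma> 0 = \<infinity> \<and> varphi \<mu> \<sigma> 0 = \<infinity>) \<and>
         (\<forall>D. 0 < D \<and> D < 2 * \<sigma>\<^sup>2 \<longrightarrow>
            phi \<mu> \<sigma> D = ennreal (1/2 * log 2 (4 * \<sigma>^4 / (4 * \<sigma>\<^sup>2 * D - D\<^sup>2))) \<and>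
            varphi \<mu> \<sigma> D = ennreal (1/2 * log 2 (2 * \<sigma>\<^sup>2 / D))) \<and>
         (\<forall>D. 2 * \<sigma>\<^sup>2 \<le> D \<longrightarrow> phi \<mu> \<sigma> D = 0 \<and> varphi \<mu> \<sigma> D = 0)"
  using assms by (simp add: phi_at_zero varphi_at_zero phi_eq varphi_eq phi_eq_0_if_ge varphi_eq_0_if_ge)

end
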